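(* Let $\rho$ be a density operator and $\sigma$ a non-negative operator on a finite-dimensional Hilbert space, and let $1\ge\epsilon>\epsilon'\ge0$. Then $$D_H^\epsilon(\rho\|\sigma)\le D_{\max}^{\epsilon'}(\rho\|\sigma)+\log_2\frac{\epsilon}{\epsilon-\epsilon'}.$$
   Context: The fidelity is $F(\rho,\sigma)=\|\sqrt\rho\sqrt\sigma\|_1$. For non-negative $\rho,\sigma$ and $\epsilon\in(0,\mathrm{tr}(\rho)]$, the generalised relative entropy is defined by $2^{-D_H^\epsilon(\rho\|\sigma)}=\inf\{\mathrm{tr}(Q\sigma)/\epsilon:\ 0\le Q\le\mathrm{id},\ \mathrm{tr}(Q\rho)\ge\epsilon\}$. For a density operator $\rho$ and $\epsilon\ge0$, the $\epsilon$-smooth max-relative entropy is defined by $2^{-D_{\max}^\epsilon(\rho\|\sigma)}=\sup\{\mu:\ \mu\bar\rho\le\sigma,\ 1-F(\bar\rho,\rho)^2\le\epsilon^2\}$, the supremum over non-negative operators $\bar\rho$ with $\mathrm{tr}(\bar\rho)\le1$ and reals $\mu$. In both cases the relative entropy is $\infty$ when the right-hand side is $0$. *)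

theory Defs
  imports Complex_Main "Jordan_Normal_Form.Schur_Decomposition" "HOL-Library.Extended_Real"
begin

text \<open>Operators on the finite-dimensional Hilbert space C^n are represented as
  complex n x n matrices (Jordan_Normal_Form).\<close>

definition cmat_trace :: "complex mat \<Rightarrow> complex" where
  "cmat_trace A = (\<Sum>i<dim_row A. A $$ (i, i))"

definition nonneg_op :: "complex mat \<Rightarrow> bool" where
  "nonneg_op A \<longleftrightarrow> A \<in> carrier_mat (dim_row A) (dim_row A) \<and> mat_adjoint A = A \<and>
     (\<forall>v \<in> carrier_vec (dim_row A). Re ((A *\<^sub>v v) \<bullet>c v) \<ge> 0)"

definition op_le :: "complex mat \<Rightarrow> complex mat \<Rightarrow> bool" where
  "op_le A B \<longleftrightarrow> dim_row A = dim_row B \<and> dim_col A = dim_col B \<and> nonneg_op (B - A)"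

definition density_op :: "complex mat \<Rightarrow> bool" where
  "density_op \<rho> \<longleftrightarrow> nonneg_op \<rho> \<and> cmat_trace \<rho> = 1"

definition op_sqrt :: "complex mat \<Rightarrow> complex mat" where
  "op_sqrt A = (THE B. nonneg_op B \<and> dim_row B = dim_row A \<and> B * B = A)"

definition trace_norm :: "complex mat \<Rightarrow> real" where
  "trace_norm X = Re (cmat_trace (op_sqrt (mat_adjoint X * X)))"

definition fidelity :: "complex mat \<Rightarrow> complex mat \<Rightarrow> real" where
  "fidelity \<rho> \<sigma> = trace_norm (op_sqrt \<rho> * op_sqrt \<sigma>)"

definition hyp_test_val :: "real \<Rightarrow> complex mat \<Rightarrow> complex mat \<Rightarrow> real" where
  "hyp_test_val \<epsilon> \<rho> \<sigma> = Inf {Re (cmat_trace (Q * \<sigma>)) / \<epsilon> | Q.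
      Q \<in> carrier_mat (dim_row \<rho>) (dim_row \<rho>) \<and> nonneg_op Q \<and>
      op_le Q (1\<^sub>m (dim_row \<rho>)) \<and> Re (cmat_trace (Q * \<rho>)) \<ge> \<epsilon>}"

definition D_H :: "real \<Rightarrow> complex mat \<Rightarrow> complex mat \<Rightarrow> ereal" where
  "D_H \<epsilon> \<rho> \<sigma> = (if hyp_test_val \<epsilon> \<rho> \<sigma> = 0 then \<infinity>
                   else ereal (- log 2 (hyp_test_val \<epsilon> \<rho> \<sigma>)))"

definition max_val :: "real \<Rightarrow> complex mat \<Rightarrow> complex mat \<Rightarrow> ereal" where
  "max_val \<epsilon> \<rho> \<sigma> = Sup {ereal \<mu> | \<mu> \<rho>'.
      \<rho>' \<in> carrier_mat (dim_row \<rho>) (dim_row \<rho>) \<and> nonneg_op \<rho>' \<and>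
      Re (cmat_trace \<rho>') \<le> 1 \<and>
      op_le (complex_of_real \<mu> \<cdot>\<^sub>m \<rho>') \<sigma> \<and>
      1 - (fidelity \<rho>' \<rho>)\<^sup>2 \<le> \<epsilon>\<^sup>2}"

definition D_max :: "real \<Rightarrow> complex mat \<Rightarrow> complex mat \<Rightarrow> ereal" where
  "D_max \<epsilon> \<rho> \<sigma> = (if max_val \<epsilon> \<rho> \<sigma> = 0 then \<infinity>
                     else if max_val \<epsilon> \<rho> \<sigma> = \<infinity> then -\<infinity>
                     else ereal (- log 2 (real_of_ereal (max_val \<epsilon> \<rho> \<sigma>))))"

end

theory Submission
  imports Defs
begin

text \<open>If \<open>\<mu> \<rho>' \<le> \<sigma>\<close> for some \<open>\<rho>'\<close> that is \<open>\<epsilon>'\<close>-close to \<open>\<rho>\<close> in purified distance, then every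
  test \<open>Q\<close> with \<open>tr (Q \<rho>) \<ge> \<epsilon>\<close> has \<open>tr (Q \<rho>') \<ge> \<epsilon> - \<epsilon>'\<close> and hence \<open>tr (Q \<sigma>) \<ge> \<mu> (\<epsilon> - \<epsilon>')\<close>.
  Taking the infimum over \<open>Q\<close> and the supremum over \<open>(\<mu>, \<rho>')\<close> gives the claim.
  The step from fidelity to test probabilities is the monotonicity of the fidelity under the
  measurement \<open>{Q, 1 - Q}\<close>: writing \<open>||sqrt \<rho>' sqrt \<rho>||\<^sub>1 = Re tr (W sqrt \<rho>' sqrt \<rho>)\<close> with a contraction
  \<open>W\<close> (polar decomposition), splitting \<open>1 = Q + (1 - Q)\<close> in the middle and applying Cauchy-Schwarz
  to each term bounds the fidelity by the Bhattacharyya overlap of the two outcome distributions.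
  Square roots and polar decompositions come from a spectral theorem for Hermitian matrices,
  proved by deflation along a unit eigenvector.\<close>

section \<open>Adjoints, traces and diagonal matrices\<close>

lemma mat_adjoint_dim[simp]: "dim_row (mat_adjoint A) = dim_col A" "dim_col (mat_adjoint A) = dim_row A"
  unfolding mat_adjoint_def by (simp_all add: mat_of_rows_def)

lemma mat_adjoint_carrier[simp,intro]: "A \<in> carrier_mat n m \<Longrightarrow> mat_adjoint A \<in> carrier_mat m n"
  by (rule carrier_matI, simp_all)

lemma mat_adjoint_index[simp]: "i < dim_col A \<Longrightarrow> j < dim_row A \<Longrightarrow> mat_adjoint A $$ (i,j) = cnj (A $$ (j,i))"
  unfolding mat_adjoint_def by (simp add: mat_of_rows_index)

lemma mat_adjoint_adjoint[simp]: "mat_adjoint (mat_adjoint (A::complex mat)) = A"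
  by (rule eq_matI, simp_all)

lemma mat_adjoint_mult: assumes "A \<in> carrier_mat n m" "B \<in> carrier_mat m k"
  shows "mat_adjoint ((A::complex mat) * B) = mat_adjoint B * mat_adjoint A"
proof (rule eq_matI)
  fix i j assume ij: "i < dim_row (mat_adjoint B * mat_adjoint A)" "j < dim_col (mat_adjoint B * mat_adjoint A)"
  thus "mat_adjoint (A * B) $$ (i, j) = (mat_adjoint B * mat_adjoint A) $$ (i, j)"
    using assms by (auto simp: scalar_prod_def intro!: sum.cong)
qed (use assms in auto)

lemma mat_adjoint_minus: assumes "A \<in> carrier_mat n m" "B \<in> carrier_mat n m"
  shows "mat_adjoint ((A::complex mat) - B) = mat_adjoint A - mat_adjoint B"
  by (rule eq_matI, insert assms, auto)

lemma mat_adjoint_one[simp]: "mat_adjoint (1\<^sub>m n :: complex mat) = 1\<^sub>m n"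
  by (rule eq_matI, auto)

lemma cmat_trace_mult_comm: assumes "A \<in> carrier_mat n m" "B \<in> carrier_mat m n"
  shows "cmat_trace ((A::complex mat) * B) = cmat_trace (B * A)"
proof -
  have "cmat_trace (A * B) = (\<Sum>i<n. \<Sum>j<m. A $$ (i,j) * B $$ (j,i))"
    using assms by (auto simp: cmat_trace_def scalar_prod_def atLeast0LessThan intro!: sum.cong)
  also have "\<dots> = (\<Sum>j<m. \<Sum>i<n. B $$ (j,i) * A $$ (i,j))"
    by (subst sum.swap, simp add: mult.commute)
  also have "\<dots> = cmat_trace (B * A)"
    using assms by (auto simp: cmat_trace_def scalar_prod_def atLeast0LessThan intro!: sum.cong)
  finally show ?thesis .
qed

lemma cmat_trace_add: assumes "A \<in> carrier_mat n n" "B \<in> carrier_mat n n"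
  shows "cmat_trace ((A::complex mat) + B) = cmat_trace A + cmat_trace B"
  using assms by (auto simp: cmat_trace_def sum.distrib)

lemma cmat_trace_minus: assumes "A \<in> carrier_mat n n" "B \<in> carrier_mat n n"
  shows "cmat_trace ((A::complex mat) - B) = cmat_trace A - cmat_trace B"
  using assms by (auto simp: cmat_trace_def sum_subtractf)

lemma cmat_trace_smult: assumes "A \<in> carrier_mat n n" shows "cmat_trace (c \<cdot>\<^sub>m (A::complex mat)) = c * cmat_trace A"
  using assms by (auto simp: cmat_trace_def sum_distrib_left)

text \<open>Fixing the dimension lets the simplifier discharge the carrier side conditions.\<close>

lemmas square_mat_mult_simps = assoc_mult_mat[of _ n n _ n _ n for n] mult_carrier_mat[of _ n n _ n for n]

definition diag_cmat :: "nat \<Rightarrow> (nat \<Rightarrow> complex) \<Rightarrow> complex mat" where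
  "diag_cmat n d = mat n n (\<lambda>(i,j). if i = j then d i else 0)"

lemma diag_cmat_carrier[simp,intro]: "diag_cmat n d \<in> carrier_mat n n"
  by (auto simp: diag_cmat_def)
lemma diag_cmat_dim[simp]: "dim_row (diag_cmat n d) = n" "dim_col (diag_cmat n d) = n"
  by (auto simp: diag_cmat_def)
lemma diag_cmat_index[simp]: "i < n \<Longrightarrow> j < n \<Longrightarrow> diag_cmat n d $$ (i,j) = (if i = j then d i else 0)"
  by (auto simp: diag_cmat_def)

lemma diag_cmat_mult: "diag_cmat n d * diag_cmat n e = diag_cmat n (\<lambda>i. d i * e i)"
proof (rule eq_matI)
  fix i j assume "i < dim_row (diag_cmat n (\<lambda>i. d i * e i))" "j < dim_col (diag_cmat n (\<lambda>i. d i * e i))"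
  hence ij: "i < n" "j < n" by auto
  have "(diag_cmat n d * diag_cmat n e) $$ (i,j) = (\<Sum>k<n. diag_cmat n d $$ (i,k) * diag_cmat n e $$ (k,j))"
    using ij by (simp add: scalar_prod_def atLeast0LessThan)
  also have "\<dots> = (\<Sum>k<n. if k = i then d i * (if i = j then e i else 0) else 0)"
    by (rule sum.cong, insert ij, auto)
  also have "\<dots> = d i * (if i = j then e i else 0)"
    using ij by (simp add: sum.delta)
  also have "\<dots> = diag_cmat n (\<lambda>i. d i * e i) $$ (i,j)" using ij by simp
  finally show "(diag_cmat n d * diag_cmat n e) $$ (i,j) = diag_cmat n (\<lambda>i. d i * e i) $$ (i,j)" .
qed (simp_all add: diag_cmat_def)

lemma mat_adjoint_diag_cmat: "mat_adjoint (diag_cmat n d) = diag_cmat n (\<lambda>i. cnj (d i))"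
  by (rule eq_matI, auto)

lemma diag_cmat_zero: "diag_cmat n (\<lambda>_. 0) = 0\<^sub>m n n"
  by (rule eq_matI, auto)

lemma diag_cmat_cong: assumes "\<And>i. i < n \<Longrightarrow> d i = e i" shows "diag_cmat n d = diag_cmat n e"
  unfolding diag_cmat_def by (rule cong_mat, insert assms, auto)

section \<open>Unitary matrices and the spectral theorem\<close>

definition unitary :: "complex mat \<Rightarrow> nat \<Rightarrow> bool" where
  "unitary U n \<longleftrightarrow> U \<in> carrier_mat n n \<and> mat_adjoint U * U = 1\<^sub>m n \<and> U * mat_adjoint U = 1\<^sub>m n"

lemma cscalar_prod_smult_self: assumes "v \<in> carrier_vec n"
  shows "(k \<cdot>\<^sub>v v) \<bullet>c (k \<cdot>\<^sub>v v) = (k * cnj k) * (v \<bullet>c (v :: complex vec))"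
proof -
  have "(k \<cdot>\<^sub>v v) \<bullet>c (k \<cdot>\<^sub>v v) = (k \<cdot>\<^sub>v v) \<bullet> (cnj k \<cdot>\<^sub>v conjugate v)"
    by (simp add: conjugate_smult_vec)
  also have "\<dots> = k * (cnj k * (v \<bullet> conjugate v))"
    using assms by simp
  finally show ?thesis by simp
qed

lemma cscalar_prod_self_real: assumes "v \<in> carrier_vec n"
  shows "v \<bullet>c (v :: complex vec) = of_real (Re (v \<bullet>c v)) \<and> Re (v \<bullet>c v) \<ge> 0"
proof -
  have "v \<bullet>c v \<ge> 0" by (rule conjugate_square_ge_0_vec)
  thus ?thesis by (auto simp: less_eq_complex_def complex_eq_iff)
qed

definition vec_normalize :: "complex vec \<Rightarrow> complex vec" where
  "vec_normalize v = complex_of_real (1 / sqrt (Re (v \<bullet>c v))) \<cdot>\<^sub>v v"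

lemma vec_normalize_carrier[simp]: "v \<in> carrier_vec n \<Longrightarrow> vec_normalize v \<in> carrier_vec n"
  unfolding vec_normalize_def by simp

lemma vec_normalize_unit:
  assumes v: "v \<in> carrier_vec n" "v \<bullet>c v \<noteq> 0"
  shows "vec_normalize v \<bullet>c vec_normalize v = 1"
proof -
  define r where "r = Re (v \<bullet>c v)"
  have vv: "v \<bullet>c v = of_real r" "r \<ge> 0" using cscalar_prod_self_real[OF v(1)] unfolding r_def by auto
  with v(2) have "r > 0" by auto
  have "vec_normalize v \<bullet>c vec_normalize v = complex_of_real ((1 / sqrt r) * (1 / sqrt r) * r)"
    unfolding vec_normalize_def r_def[symmetric] unfolding cscalar_prod_smult_self[OF v(1)] vv(1)
    by (simp only: complex_cnj_complex_of_real of_real_mult)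
  also have "(1 / sqrt r) * (1 / sqrt r) * r = 1"
    using \<open>r > 0\<close> real_sqrt_mult_self[of r] by (simp add: field_simps)
  finally show ?thesis by simp
qed

lemma vec_normalize_id: "v \<bullet>c v = 1 \<Longrightarrow> vec_normalize v = v"
  unfolding vec_normalize_def by simp

lemma unit_eigenvector: assumes A: "(A :: complex mat) \<in> carrier_mat (Suc m) (Suc m)"
  shows "\<exists>e u. u \<in> carrier_vec (Suc m) \<and> u \<bullet>c u = 1 \<and> A *\<^sub>v u = e \<cdot>\<^sub>v u"
proof -
  from char_poly_factorized[OF A] obtain as where cp: "char_poly A = (\<Prod>a\<leftarrow>as. [:- a, 1:])"
    and len: "length as = Suc m" by auto
  then obtain a rest where as: "as = a # rest" by (cases as) auto
  have "poly (char_poly A) a = 0" unfolding cp as by simp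
  hence "eigenvalue A a" using eigenvalue_root_char_poly[OF A] by simp
  from find_eigenvector[OF A this] obtain v where "eigenvector A v a" by blast
  hence v: "v \<in> carrier_vec (Suc m)" "v \<noteq> 0\<^sub>v (Suc m)" "A *\<^sub>v v = a \<cdot>\<^sub>v v"
    unfolding eigenvector_def using A by auto
  have "v \<bullet>c v \<noteq> 0" using v by simp
  have "A *\<^sub>v vec_normalize v = complex_of_real (1 / sqrt (Re (v \<bullet>c v))) \<cdot>\<^sub>v (A *\<^sub>v v)"
    unfolding vec_normalize_def using A v by (intro mult_mat_vec[of _ "Suc m" "Suc m"])
  also have "\<dots> = a \<cdot>\<^sub>v vec_normalize v"
    unfolding v(3) vec_normalize_def by (simp add: smult_smult_assoc mult.commute)
  finally show ?thesis using vec_normalize_unit[OF v(1) \<open>v \<bullet>c v \<noteq> 0\<close>] vec_normalize_carrier[OF v(1)]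
    by blast
qed

lemma unitary_mat_of_cols_orthonormal: assumes us: "set us \<subseteq> carrier_vec n" "length us = n"
  and on: "\<And>i j. i < n \<Longrightarrow> j < n \<Longrightarrow> us ! i \<bullet>c us ! j = (if i = j then 1 else 0)"
  shows "unitary (mat_of_cols n us) n"
proof -
  define W where "W = mat_of_cols n us"
  have W: "W \<in> carrier_mat n n" unfolding W_def using us by auto
  have WW: "mat_adjoint W * W = 1\<^sub>m n"
  proof (rule eq_matI)
    fix i j assume ij: "i < dim_row (1\<^sub>m n :: complex mat)" "j < dim_col (1\<^sub>m n :: complex mat)"
    hence ij: "i < n" "j < n" by auto
    have ui: "us ! i \<in> carrier_vec n" "us ! j \<in> carrier_vec n" using us ij by auto
    have "(mat_adjoint W * W) $$ (i,j) = (\<Sum>k<n. cnj (W $$ (k,i)) * W $$ (k,j))"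
      using W ij by (simp add: scalar_prod_def atLeast0LessThan)
    also have "\<dots> = (\<Sum>k<n. us ! j $ k * cnj (us ! i $ k))"
      unfolding W_def using ij us by (intro sum.cong, auto simp: mat_of_cols_index)
    also have "\<dots> = us ! j \<bullet>c us ! i"
      using ui by (simp add: scalar_prod_def atLeast0LessThan)
    also have "\<dots> = 1\<^sub>m n $$ (i,j)" using on[OF ij(2) ij(1)] ij by auto
    finally show "(mat_adjoint W * W) $$ (i,j) = 1\<^sub>m n $$ (i,j)" .
  qed (use W in auto)
  have "W * mat_adjoint W = 1\<^sub>m n"
    by (rule mat_mult_left_right_inverse[OF _ W WW], use W in auto)
  with WW W show ?thesis unfolding unitary_def W_def by auto
qed

lemma unitary_completion: assumes u: "u \<in> carrier_vec n" and uu: "u \<bullet>c u = (1::complex)"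
  shows "\<exists>W. unitary W n \<and> col W 0 = u"
proof -
  have u0: "u \<noteq> 0\<^sub>v n" using uu u by auto
  hence n: "n \<noteq> 0" using u by auto
  interpret cof_vec_space n "TYPE(complex)" .
  define b where "b = basis_completion u"
  define ws where "ws = gram_schmidt n b"
  from basis_completion[OF u u0, folded b_def]
  have dist_b: "distinct b" and indep: "\<not> lin_dep (set b)" and b: "set b \<subseteq> carrier_vec n"
    and hdb: "hd b = u" and len_b: "length b = n" by auto
  from hdb len_b n obtain vs where bv: "b = u # vs" by (cases b) auto
  from gram_schmidt_result[OF b dist_b indep refl, folded ws_def]
  have ws: "set ws \<subseteq> carrier_vec n" "corthogonal ws" "length ws = n" by (auto simp: len_b)
  from gram_schmidt_hd[OF u, of vs, folded bv] have hdws: "hd ws = u" unfolding ws_def .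
  define us where "us = map vec_normalize ws"
  have us: "set us \<subseteq> carrier_vec n" "length us = n" unfolding us_def using ws by auto
  have on: "us ! i \<bullet>c us ! j = (if i = j then 1 else 0)" if ij: "i < n" "j < n" for i j
  proof -
    have wi: "ws ! i \<in> carrier_vec n" "ws ! j \<in> carrier_vec n" using ws ij by auto
    have orth: "(ws ! i \<bullet>c ws ! j = 0) = (i \<noteq> j)" using corthogonalD[OF ws(2)] ws(3) ij by simp
    show ?thesis
    proof (cases "i = j")
      case True
      thus ?thesis using vec_normalize_unit[OF wi(1)] orth ij unfolding us_def by (simp add: ws(3))
    next
      case False
      have "vec_normalize (ws ! i) \<bullet>c vec_normalize (ws ! j)
          = complex_of_real (1 / sqrt (Re (ws ! i \<bullet>c ws ! i)))
            * (cnj (complex_of_real (1 / sqrt (Re (ws ! j \<bullet>c ws ! j)))) * (ws ! i \<bullet>c ws ! j))"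
        unfolding vec_normalize_def using wi by (simp add: conjugate_smult_vec)
      thus ?thesis using orth False ij unfolding us_def by (simp add: ws(3))
    qed
  qed
  have "ws ! 0 = u" using hdws ws n by (cases ws) auto
  have "col (mat_of_cols n us) 0 = us ! 0" using us n by (intro col_mat_of_cols) auto
  also have "us ! 0 = u" unfolding us_def using \<open>ws ! 0 = u\<close> n ws(3) vec_normalize_id[OF uu] by simp
  finally have "col (mat_of_cols n us) 0 = u" .
  with unitary_mat_of_cols_orthonormal[OF us on] show ?thesis by blast
qed

lemma unitary_cancel: assumes "unitary U n" "X \<in> carrier_mat n k"
  shows "mat_adjoint U * (U * X) = X" "U * (mat_adjoint U * X) = X"
proof -
  have U: "U \<in> carrier_mat n n" "mat_adjoint U * U = 1\<^sub>m n" "U * mat_adjoint U = 1\<^sub>m n"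
    using assms unfolding unitary_def by auto
  have aU: "mat_adjoint U \<in> carrier_mat n n" using U by auto
  have "mat_adjoint U * (U * X) = (mat_adjoint U * U) * X"
    using assoc_mult_mat[OF aU U(1) assms(2)] by simp
  thus "mat_adjoint U * (U * X) = X" using U assms by simp
  have "U * (mat_adjoint U * X) = (U * mat_adjoint U) * X"
    using assoc_mult_mat[OF U(1) aU assms(2)] by simp
  thus "U * (mat_adjoint U * X) = X" using U assms by simp
qed

lemma unitary_mult: assumes "unitary U n" "unitary V n" shows "unitary (U * V) n"
proof -
  have U: "U \<in> carrier_mat n n" "mat_adjoint U * U = 1\<^sub>m n" "U * mat_adjoint U = 1\<^sub>m n"
    and V: "V \<in> carrier_mat n n" "mat_adjoint V * V = 1\<^sub>m n" "V * mat_adjoint V = 1\<^sub>m n"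
    using assms unfolding unitary_def by auto
  have aU: "mat_adjoint U \<in> carrier_mat n n" and aV: "mat_adjoint V \<in> carrier_mat n n" using U V by auto
  have adj: "mat_adjoint (U * V) = mat_adjoint V * mat_adjoint U" by (rule mat_adjoint_mult[OF U(1) V(1)])
  have "mat_adjoint V * mat_adjoint U * (U * V) = mat_adjoint V * (mat_adjoint U * (U * V))"
    using U V aU aV by (rule_tac assoc_mult_mat, auto)
  also have "\<dots> = 1\<^sub>m n" using unitary_cancel(1)[OF assms(1) V(1)] V by simp
  finally have 1: "mat_adjoint (U * V) * (U * V) = 1\<^sub>m n" unfolding adj .
  have "U * V * (mat_adjoint V * mat_adjoint U) = U * (V * (mat_adjoint V * mat_adjoint U))"
    using U V aU aV by (rule_tac assoc_mult_mat, auto)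
  also have "\<dots> = 1\<^sub>m n" using unitary_cancel(2)[OF assms(2) aU] U by simp
  finally have 2: "U * V * mat_adjoint (U * V) = 1\<^sub>m n" unfolding adj .
  show ?thesis unfolding unitary_def using 1 2 U V by auto
qed

definition block_diag1 :: "nat \<Rightarrow> complex mat \<Rightarrow> complex mat" where
  "block_diag1 m U = four_block_mat (1\<^sub>m 1) (0\<^sub>m 1 m) (0\<^sub>m m 1) U"

lemma mat_adjoint_four_block: assumes "A \<in> carrier_mat n1 m1" "B \<in> carrier_mat n1 m2" "C \<in> carrier_mat n2 m1" "D \<in> carrier_mat n2 m2"
  shows "mat_adjoint (four_block_mat A B C D :: complex mat) = four_block_mat (mat_adjoint A) (mat_adjoint C) (mat_adjoint B) (mat_adjoint D)"
  by (rule eq_matI, insert assms, auto)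

lemma block_diag1_carrier[simp]: "U \<in> carrier_mat m m \<Longrightarrow> block_diag1 m U \<in> carrier_mat (Suc m) (Suc m)"
  unfolding block_diag1_def using four_block_carrier_mat[of "1\<^sub>m 1 :: complex mat" 1 1 U m m] by auto

lemma mat_adjoint_block_diag1: "U \<in> carrier_mat m m \<Longrightarrow> mat_adjoint (block_diag1 m U) = block_diag1 m (mat_adjoint U)"
  unfolding block_diag1_def by (subst mat_adjoint_four_block[of _ 1 1 _ m _ m], auto)

lemma block_diag1_mult: assumes "U \<in> carrier_mat m m" "V \<in> carrier_mat m m"
  shows "block_diag1 m U * block_diag1 m V = block_diag1 m (U * V)"
  unfolding block_diag1_def
  by (subst mult_four_block_mat[of _ 1 1 _ m _ m _ _ 1 _ m], insert assms, auto)

lemma unitary_block_diag1: assumes "unitary U m" shows "unitary (block_diag1 m U) (Suc m)"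
proof -
  have U: "U \<in> carrier_mat m m" "mat_adjoint U * U = 1\<^sub>m m" "U * mat_adjoint U = 1\<^sub>m m"
    using assms unfolding unitary_def by auto
  have one: "block_diag1 m (1\<^sub>m m) = 1\<^sub>m (Suc m)" unfolding block_diag1_def
    using four_block_one_mat[of 1 m, where 'a=complex] by simp
  show ?thesis unfolding unitary_def
    using U by (simp add: mat_adjoint_block_diag1 block_diag1_mult one)
qed

lemma diag_cmat_Suc: "diag_cmat (Suc m) d = four_block_mat (diag_cmat 1 (\<lambda>_. d 0)) (0\<^sub>m 1 m) (0\<^sub>m m 1) (diag_cmat m (\<lambda>i. d (Suc i)))"
  by (rule eq_matI, auto)

lemma block_diag1_conj_diag_cmat: assumes "U \<in> carrier_mat m m"
  shows "block_diag1 m U * diag_cmat (Suc m) d * mat_adjoint (block_diag1 m U) = 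
    four_block_mat (diag_cmat 1 (\<lambda>_. d 0)) (0\<^sub>m 1 m) (0\<^sub>m m 1) (U * diag_cmat m (\<lambda>i. d (Suc i)) * mat_adjoint U)"
proof -
  have aU: "mat_adjoint U \<in> carrier_mat m m" using assms by auto
  have "block_diag1 m U * diag_cmat (Suc m) d = four_block_mat (diag_cmat 1 (\<lambda>_. d 0)) (0\<^sub>m 1 m) (0\<^sub>m m 1) (U * diag_cmat m (\<lambda>i. d (Suc i)))"
    unfolding block_diag1_def diag_cmat_Suc
    by (subst mult_four_block_mat[of _ 1 1 _ m _ m _ _ 1 _ m], insert assms, auto)
  moreover have "\<dots> * mat_adjoint (block_diag1 m U) = four_block_mat (diag_cmat 1 (\<lambda>_. d 0)) (0\<^sub>m 1 m) (0\<^sub>m m 1) (U * diag_cmat m (\<lambda>i. d (Suc i)) * mat_adjoint U)"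
    apply (simp only: mat_adjoint_block_diag1[OF assms])
    unfolding block_diag1_def
    by (subst mult_four_block_mat[of _ 1 1 _ m _ m _ _ 1 _ m], insert assms aU, auto)
  ultimately show ?thesis by simp
qed

lemma unitary_conj_eigenvector_col:
  assumes A: "A \<in> carrier_mat n n" and W: "unitary W n" and ij: "i < n" "j < n"
    and e: "A *\<^sub>v col W j = e \<cdot>\<^sub>v col W j"
  shows "(mat_adjoint W * (A * W)) $$ (i, j) = (if i = j then e else 0)"
proof -
  have Wc: "W \<in> carrier_mat n n" "mat_adjoint W \<in> carrier_mat n n" using W unfolding unitary_def by auto
  have "(mat_adjoint W * (A * W)) $$ (i, j) = row (mat_adjoint W) i \<bullet> col (A * W) j"
    using ij Wc A by simp
  also have "col (A * W) j = e \<cdot>\<^sub>v col W j" using col_mult2[OF A Wc(1) ij(2)] e by simp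
  also have "row (mat_adjoint W) i \<bullet> (e \<cdot>\<^sub>v col W j) = e * (row (mat_adjoint W) i \<bullet> col W j)"
    by (rule scalar_prod_smult_distrib[OF row_carrier_vec[OF ij(1) Wc(2)] col_carrier_vec[OF ij(2) Wc(1)]])
  also have "row (mat_adjoint W) i \<bullet> col W j = (mat_adjoint W * W) $$ (i, j)" using ij Wc by simp
  finally show ?thesis using W ij unfolding unitary_def by simp
qed

lemma hermitian_lower_block:
  assumes B: "(B :: complex mat) \<in> carrier_mat (Suc m) (Suc m)" "mat_adjoint B = B"
  shows "mat_adjoint (mat m m (\<lambda>(i, j). B $$ (Suc i, Suc j))) = mat m m (\<lambda>(i, j). B $$ (Suc i, Suc j))"
    (is "mat_adjoint ?B4 = ?B4")
proof (rule eq_matI)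
  fix i j assume "i < dim_row ?B4" "j < dim_col ?B4"
  hence ij: "i < m" "j < m" by auto
  have "mat_adjoint ?B4 $$ (i, j) = cnj (B $$ (Suc j, Suc i))" using ij by simp
  also have "\<dots> = mat_adjoint B $$ (Suc i, Suc j)" using ij B(1) by simp
  also have "\<dots> = ?B4 $$ (i, j)" using ij B(2) by simp
  finally show "mat_adjoint ?B4 $$ (i, j) = ?B4 $$ (i, j)" .
qed auto

lemma hermitian_deflation:
  assumes A: "A \<in> carrier_mat (Suc m) (Suc m)" and herm: "mat_adjoint A = A"
    and W: "unitary W (Suc m)" and u: "A *\<^sub>v col W 0 = e \<cdot>\<^sub>v col W 0"
  shows "cnj e = e"
    and "\<exists>B4. B4 \<in> carrier_mat m m \<and> mat_adjoint B4 = B4 \<and>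
      mat_adjoint W * (A * W) = four_block_mat (diag_cmat 1 (\<lambda>_. e)) (0\<^sub>m 1 m) (0\<^sub>m m 1) B4"
proof -
  have Wc: "W \<in> carrier_mat (Suc m) (Suc m)" using W unfolding unitary_def by auto
  have aW: "mat_adjoint W \<in> carrier_mat (Suc m) (Suc m)" using Wc by auto
  define B where "B = mat_adjoint W * (A * W)"
  have Bc: "B \<in> carrier_mat (Suc m) (Suc m)" unfolding B_def using Wc aW A by auto
  have hB: "mat_adjoint B = B" unfolding B_def
    using mat_adjoint_mult[OF aW, of "A * W" "Suc m"] mat_adjoint_mult[OF A Wc] Wc A herm
    by (simp add: square_mat_mult_simps[where n="Suc m"])
  have Bcol: "B $$ (i,0) = (if i = 0 then e else 0)" if "i < Suc m" for i
    unfolding B_def using unitary_conj_eigenvector_col[OF A W that _ u] by simp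
  have Brow: "B $$ (0,j) = cnj (B $$ (j,0))" if j: "j < Suc m" for j
  proof -
    have "B $$ (0,j) = mat_adjoint B $$ (0,j)" using hB by simp
    also have "\<dots> = cnj (B $$ (j,0))" using j Bc by simp
    finally show ?thesis .
  qed
  show e_real: "cnj e = e" using Brow[of 0] Bcol[of 0] by simp
  define B4 where "B4 = mat m m (\<lambda>(i,j). B $$ (Suc i, Suc j))"
  have B4c: "B4 \<in> carrier_mat m m" unfolding B4_def by simp
  have B4d[simp]: "dim_row B4 = m" "dim_col B4 = m" unfolding B4_def by simp_all
  have "four_block_mat (diag_cmat 1 (\<lambda>_. e)) (0\<^sub>m 1 m) (0\<^sub>m m 1) B4 = B"
  proof (rule eq_matI)
    fix i j assume ij: "i < dim_row B" "j < dim_col B"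
    hence ij': "i < Suc m" "j < Suc m" using Bc by auto
    show "four_block_mat (diag_cmat 1 (\<lambda>_. e)) (0\<^sub>m 1 m) (0\<^sub>m m 1) B4 $$ (i,j) = B $$ (i,j)"
    proof (cases "i = 0")
      case True
      thus ?thesis using ij' Brow[OF ij'(2)] Bcol[OF ij'(2)] e_real by auto
    next
      case False
      show ?thesis
      proof (cases "j = 0")
        case True
        thus ?thesis using ij' Bcol[OF ij'(1)] False by auto
      next
        case False
        thus ?thesis using ij' \<open>i \<noteq> 0\<close> unfolding B4_def by auto
      qed
    qed
  qed (use Bc B4c in auto)
  hence "mat_adjoint W * (A * W) = four_block_mat (diag_cmat 1 (\<lambda>_. e)) (0\<^sub>m 1 m) (0\<^sub>m m 1) B4"
    unfolding B_def by (rule sym)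
  with B4c hermitian_lower_block[OF Bc hB, folded B4_def]
  show "\<exists>B4. B4 \<in> carrier_mat m m \<and> mat_adjoint B4 = B4 \<and>
      mat_adjoint W * (A * W) = four_block_mat (diag_cmat 1 (\<lambda>_. e)) (0\<^sub>m 1 m) (0\<^sub>m m 1) B4"
    by blast
qed

lemma hermitian_spectral: assumes "A \<in> carrier_mat n n" "mat_adjoint A = A"
  shows "\<exists>U d. unitary U n \<and> (\<forall>i<n. d i = of_real (Re (d i))) \<and> A = U * diag_cmat n d * mat_adjoint U"
  using assms
proof (induction n arbitrary: A)
  case 0
  have "A = 1\<^sub>m 0 * diag_cmat 0 (\<lambda>_. 0) * mat_adjoint (1\<^sub>m 0)"
    using 0 by (intro eq_matI) auto
  moreover have "unitary (1\<^sub>m 0) 0" unfolding unitary_def by simp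
  ultimately show ?case by blast
next
  case (Suc m A)
  obtain e u where u: "u \<in> carrier_vec (Suc m)" "u \<bullet>c u = 1" "A *\<^sub>v u = e \<cdot>\<^sub>v u"
    using unit_eigenvector[OF Suc.prems(1)] by blast
  obtain W where W: "unitary W (Suc m)" "col W 0 = u" using unitary_completion[OF u(1,2)] by blast
  have Wc: "W \<in> carrier_mat (Suc m) (Suc m)" using W unfolding unitary_def by auto
  note deflate = hermitian_deflation[OF Suc.prems W(1) u(3)[folded W(2)]]
  obtain B where B: "B \<in> carrier_mat m m" "mat_adjoint B = B"
    and WAW: "mat_adjoint W * (A * W) = four_block_mat (diag_cmat 1 (\<lambda>_. e)) (0\<^sub>m 1 m) (0\<^sub>m m 1) B"
    using deflate(2) by blast
  obtain U d where U: "unitary U m" "\<forall>i<m. d i = of_real (Re (d i))" "B = U * diag_cmat m d * mat_adjoint U"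
    using Suc.IH[OF B] by blast
  have Uc: "U \<in> carrier_mat m m" using U(1) unfolding unitary_def by auto
  define d' where "d' = (\<lambda>i. if i = 0 then e else d (i - 1))"
  define F where "F = block_diag1 m U"
  have Fc: "F \<in> carrier_mat (Suc m) (Suc m)" unfolding F_def using Uc by simp
  have "mat_adjoint W * (A * W) = F * diag_cmat (Suc m) d' * mat_adjoint F"
    unfolding WAW F_def block_diag1_conj_diag_cmat[OF Uc] U(3) d'_def by simp
  hence "A = W * (F * diag_cmat (Suc m) d' * mat_adjoint F) * mat_adjoint W"
    using unitary_cancel(2)[OF W(1), of "A * W" "Suc m"] unitary_cancel(2)[OF W(1), of A "Suc m"]
      Suc.prems(1) Wc W(1) unfolding unitary_def
    by (simp add: square_mat_mult_simps[where n="Suc m"])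
  also have "\<dots> = (W * F) * diag_cmat (Suc m) d' * mat_adjoint (W * F)"
    unfolding mat_adjoint_mult[OF Wc Fc] using Wc Fc by (simp add: square_mat_mult_simps[where n="Suc m"])
  finally have "A = (W * F) * diag_cmat (Suc m) d' * mat_adjoint (W * F)" .
  moreover have "unitary (W * F) (Suc m)"
    unfolding F_def by (rule unitary_mult[OF W(1) unitary_block_diag1[OF U(1)]])
  moreover have "\<forall>i<Suc m. d' i = of_real (Re (d' i))"
    using U(2) deflate(1) unfolding d'_def by (auto simp: complex_eq_iff)
  ultimately show ?case by blast
qed

section \<open>Non-negative operators and their square roots\<close>

lemma cscalar_prod_sum: assumes "v \<in> carrier_vec n" "w \<in> carrier_vec n"
  shows "v \<bullet>c (w :: complex vec) = (\<Sum>i<n. v $ i * cnj (w $ i))"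
  using assms by (simp add: scalar_prod_def atLeast0LessThan)

lemma cscalar_prod_swap: assumes "v \<in> carrier_vec n" "w \<in> carrier_vec n"
  shows "v \<bullet>c (w :: complex vec) = cnj (w \<bullet>c v)"
  using assms by (simp add: cscalar_prod_sum[of _ n] mult.commute)

lemma mat_adjoint_shift: assumes A: "A \<in> carrier_mat n n" and v: "v \<in> carrier_vec n" and w: "w \<in> carrier_vec n"
  shows "(A *\<^sub>v v) \<bullet>c (w :: complex vec) = v \<bullet>c (mat_adjoint A *\<^sub>v w)"
proof -
  have "(A *\<^sub>v v) \<bullet>c w = (\<Sum>i<n. (\<Sum>j<n. A $$ (i,j) * v $ j) * cnj (w $ i))"
    using A v w by (simp add: cscalar_prod_sum[of _ n] scalar_prod_def atLeast0LessThan)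
  also have "\<dots> = (\<Sum>i<n. \<Sum>j<n. A $$ (i,j) * v $ j * cnj (w $ i))"
    by (simp add: sum_distrib_right)
  also have "\<dots> = (\<Sum>j<n. \<Sum>i<n. A $$ (i,j) * v $ j * cnj (w $ i))" by (rule sum.swap)
  also have "\<dots> = (\<Sum>j<n. v $ j * cnj (\<Sum>i<n. cnj (A $$ (i,j)) * w $ i))"
    by (simp add: sum_distrib_left mult_ac)
  also have "\<dots> = v \<bullet>c (mat_adjoint A *\<^sub>v w)"
    using A v w by (simp add: cscalar_prod_sum[of _ n] scalar_prod_def atLeast0LessThan)
  finally show ?thesis .
qed

lemma hermitian_quadratic_form_real: assumes A: "A \<in> carrier_mat n n" "mat_adjoint A = A" and v: "v \<in> carrier_vec n"
  shows "(A *\<^sub>v v) \<bullet>c v = of_real (Re ((A *\<^sub>v v) \<bullet>c v))"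
proof -
  have "(A *\<^sub>v v) \<bullet>c v = v \<bullet>c (A *\<^sub>v v)" using mat_adjoint_shift[OF A(1) v v] A(2) by simp
  also have "\<dots> = cnj ((A *\<^sub>v v) \<bullet>c v)" using cscalar_prod_swap[of v n "A *\<^sub>v v"] A v by simp
  finally show ?thesis by (simp add: complex_eq_iff)
qed

lemma nonneg_opD: assumes "nonneg_op A" "A \<in> carrier_mat n n"
  shows "mat_adjoint A = A" "\<And>v. v \<in> carrier_vec n \<Longrightarrow> Re ((A *\<^sub>v v) \<bullet>c v) \<ge> 0"
  using assms unfolding nonneg_op_def by auto

lemma nonneg_opI: assumes "A \<in> carrier_mat n n" "mat_adjoint A = A" "\<And>v. v \<in> carrier_vec n \<Longrightarrow> Re ((A *\<^sub>v v) \<bullet>c v) \<ge> 0"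
  shows "nonneg_op A"
  using assms unfolding nonneg_op_def by auto

lemma diag_cmat_mult_vec: "v \<in> carrier_vec n \<Longrightarrow> diag_cmat n d *\<^sub>v v = vec n (\<lambda>i. d i * v $ i)"
proof (rule eq_vecI)
  fix i assume v: "v \<in> carrier_vec n" and i: "i < dim_vec (vec n (\<lambda>i. d i * v $ i))"
  hence i: "i < n" by simp
  have "(diag_cmat n d *\<^sub>v v) $ i = (\<Sum>k<n. (if i = k then d i else 0) * v $ k)"
    using i v by (simp add: scalar_prod_def atLeast0LessThan)
  also have "\<dots> = (\<Sum>k<n. if k = i then d i * v $ i else 0)" by (rule sum.cong, auto)
  also have "\<dots> = d i * v $ i" using i by simp
  finally show "(diag_cmat n d *\<^sub>v v) $ i = vec n (\<lambda>i. d i * v $ i) $ i" using i by simp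
qed simp

lemma quadratic_form_spectral: assumes U: "unitary U n" and x: "x \<in> carrier_vec n"
  shows "((U * diag_cmat n d * mat_adjoint U) *\<^sub>v x) \<bullet>c x = (\<Sum>i<n. d i * of_real ((cmod ((mat_adjoint U *\<^sub>v x) $ i))\<^sup>2))"
proof -
  have Uc: "U \<in> carrier_mat n n" and aU: "mat_adjoint U \<in> carrier_mat n n" using U unfolding unitary_def by auto
  define y where "y = mat_adjoint U *\<^sub>v x"
  have y: "y \<in> carrier_vec n" unfolding y_def using aU x by simp
  have "(U * diag_cmat n d * mat_adjoint U) *\<^sub>v x = (U * diag_cmat n d) *\<^sub>v y"
    unfolding y_def using Uc aU x by (intro assoc_mult_mat_vec[of _ n n _ n], auto)
  also have "\<dots> = U *\<^sub>v (diag_cmat n d *\<^sub>v y)"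
    using Uc y by (intro assoc_mult_mat_vec[of _ n n _ n], auto)
  finally have "(U * diag_cmat n d * mat_adjoint U) *\<^sub>v x = U *\<^sub>v (diag_cmat n d *\<^sub>v y)" .
  moreover have z: "diag_cmat n d *\<^sub>v y \<in> carrier_vec n" using y by (intro mult_mat_vec_carrier[of _ n n], auto)
  ultimately have "((U * diag_cmat n d * mat_adjoint U) *\<^sub>v x) \<bullet>c x = (diag_cmat n d *\<^sub>v y) \<bullet>c y"
    using mat_adjoint_shift[OF Uc z x] unfolding y_def by simp
  also have "\<dots> = (\<Sum>i<n. d i * y $ i * cnj (y $ i))"
    using y by (simp add: diag_cmat_mult_vec cscalar_prod_sum[of _ n])
  also have "\<dots> = (\<Sum>i<n. d i * of_real ((cmod (y $ i))\<^sup>2))"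
    by (rule sum.cong, simp_all only: mult.assoc complex_norm_square)
  finally show ?thesis unfolding y_def .
qed

lemma unitary_col_eigenvector: assumes U: "unitary U n" and i: "i < n"
  shows "(U * diag_cmat n d * mat_adjoint U) *\<^sub>v col U i = d i \<cdot>\<^sub>v col U i"
    "col U i \<bullet>c col U i = 1" "col U i \<in> carrier_vec n"
proof -
  have Uc: "U \<in> carrier_mat n n" and aU: "mat_adjoint U \<in> carrier_mat n n"
    and UU: "mat_adjoint U * U = 1\<^sub>m n" using U unfolding unitary_def by auto
  have c: "col U i = U *\<^sub>v unit_vec n i" using Uc i by (intro eq_vecI, auto)
  have "mat_adjoint U *\<^sub>v col U i = (mat_adjoint U * U) *\<^sub>v unit_vec n i"
    unfolding c using Uc aU by (intro assoc_mult_mat_vec[symmetric, of _ n n _ n], auto)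
  also have "\<dots> = unit_vec n i" using UU by simp
  finally have ac: "mat_adjoint U *\<^sub>v col U i = unit_vec n i" .
  have "(U * diag_cmat n d * mat_adjoint U) *\<^sub>v col U i = (U * diag_cmat n d) *\<^sub>v (mat_adjoint U *\<^sub>v col U i)"
    using Uc aU by (intro assoc_mult_mat_vec[of _ n n _ n], auto)
  also have "\<dots> = U *\<^sub>v (diag_cmat n d *\<^sub>v unit_vec n i)"
    unfolding ac using Uc by (intro assoc_mult_mat_vec[of _ n n _ n], auto)
  finally have "(U * diag_cmat n d * mat_adjoint U) *\<^sub>v col U i = U *\<^sub>v (diag_cmat n d *\<^sub>v unit_vec n i)" .
  also have "diag_cmat n d *\<^sub>v unit_vec n i = d i \<cdot>\<^sub>v unit_vec n i"
    by (rule eq_vecI, auto simp: diag_cmat_mult_vec unit_vec_def)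
  also have "U *\<^sub>v (d i \<cdot>\<^sub>v unit_vec n i) = d i \<cdot>\<^sub>v col U i"
    unfolding c using Uc by (intro mult_mat_vec[of _ n n], auto)
  finally show "(U * diag_cmat n d * mat_adjoint U) *\<^sub>v col U i = d i \<cdot>\<^sub>v col U i" .
  show "col U i \<in> carrier_vec n" using Uc unfolding carrier_vec_def by simp
  have "col U i \<bullet>c col U i = (mat_adjoint U * U) $$ (i,i)"
    using Uc i by (simp add: scalar_prod_def mult.commute)
  thus "col U i \<bullet>c col U i = 1" using UU i by simp
qed

lemma nonneg_op_spectral: assumes A: "nonneg_op A" "A \<in> carrier_mat n n"
  shows "\<exists>U d. unitary U n \<and> (\<forall>i<n. d i = of_real (Re (d i)) \<and> Re (d i) \<ge> 0) \<and> A = U * diag_cmat n d * mat_adjoint U"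
proof -
  obtain U d where Ud: "unitary U n" "\<forall>i<n. d i = of_real (Re (d i))" "A = U * diag_cmat n d * mat_adjoint U"
    using hermitian_spectral[OF A(2) nonneg_opD(1)[OF A]] by blast
  have "Re (d i) \<ge> 0" if i: "i < n" for i
  proof -
    note ce = unitary_col_eigenvector(1)[OF Ud(1) i, of d] unitary_col_eigenvector(2,3)[OF Ud(1) i]
    have "(A *\<^sub>v col U i) \<bullet>c col U i = (d i \<cdot>\<^sub>v col U i) \<bullet>c col U i" using ce Ud(3) by simp
    also have "\<dots> = d i * (col U i \<bullet>c col U i)" using ce(3) by (simp add: smult_scalar_prod_distrib[of _ n])
    also have "\<dots> = d i" using ce(2) by simp
    finally show ?thesis using nonneg_opD(2)[OF A ce(3)] by simp
  qed
  thus ?thesis using Ud by blast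
qed

lemma nonneg_op_of_spectral: assumes U: "unitary U n" and d: "\<forall>i<n. d i = of_real (Re (d i)) \<and> Re (d i) \<ge> 0"
  shows "nonneg_op (U * diag_cmat n d * mat_adjoint U)" "U * diag_cmat n d * mat_adjoint U \<in> carrier_mat n n"
proof -
  have Uc: "U \<in> carrier_mat n n" and aU: "mat_adjoint U \<in> carrier_mat n n" using U unfolding unitary_def by auto
  show c: "U * diag_cmat n d * mat_adjoint U \<in> carrier_mat n n" using Uc aU by auto
  have "mat_adjoint (U * diag_cmat n d * mat_adjoint U) = mat_adjoint (mat_adjoint U) * mat_adjoint (U * diag_cmat n d)"
    using Uc aU by (intro mat_adjoint_mult[of _ n n _ n], auto)
  also have "\<dots> = U * (mat_adjoint (diag_cmat n d) * mat_adjoint U)" using mat_adjoint_mult[OF Uc, of "diag_cmat n d" n] Uc aU by simp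
  also have "mat_adjoint (diag_cmat n d) = diag_cmat n d" unfolding mat_adjoint_diag_cmat
    by (rule diag_cmat_cong, insert d, metis complex_cnj_complex_of_real)
  also have "U * (diag_cmat n d * mat_adjoint U) = U * diag_cmat n d * mat_adjoint U" using Uc aU by (intro assoc_mult_mat[symmetric, of _ n n _ n _ n], auto)
  finally have h: "mat_adjoint (U * diag_cmat n d * mat_adjoint U) = U * diag_cmat n d * mat_adjoint U" .
  show "nonneg_op (U * diag_cmat n d * mat_adjoint U)"
  proof (rule nonneg_opI[OF c h])
    fix v :: "complex vec" assume v: "v \<in> carrier_vec n"
    have "Re ((U * diag_cmat n d * mat_adjoint U *\<^sub>v v) \<bullet>c v) = (\<Sum>i<n. Re (d i) * (cmod ((mat_adjoint U *\<^sub>v v) $ i))\<^sup>2)"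
      unfolding quadratic_form_spectral[OF U v] Re_sum by (rule sum.cong, auto)
    also have "\<dots> \<ge> 0"
    proof (intro sum_nonneg mult_nonneg_nonneg)
      fix i assume "i \<in> {..<n}" thus "Re (d i) \<ge> 0" using d by blast
    qed auto
    finally show "Re ((U * diag_cmat n d * mat_adjoint U *\<^sub>v v) \<bullet>c v) \<ge> 0" .
  qed
qed

lemma nonneg_op_sqrt_exists: assumes A: "nonneg_op A" "A \<in> carrier_mat n n"
  shows "\<exists>B. nonneg_op B \<and> B \<in> carrier_mat n n \<and> B * B = A"
proof -
  obtain U d where Ud: "unitary U n" "\<forall>i<n. d i = of_real (Re (d i)) \<and> Re (d i) \<ge> 0" "A = U * diag_cmat n d * mat_adjoint U"
    using nonneg_op_spectral[OF A] by blast
  have Uc: "U \<in> carrier_mat n n" and aU: "mat_adjoint U \<in> carrier_mat n n" and UU: "mat_adjoint U * U = 1\<^sub>m n"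
    using Ud unfolding unitary_def by auto
  define e where "e = (\<lambda>i. complex_of_real (sqrt (Re (d i))))"
  have e: "\<forall>i<n. e i = of_real (Re (e i)) \<and> Re (e i) \<ge> 0"
  proof (intro allI impI conjI)
    fix i assume "i < n"
    hence "Re (d i) \<ge> 0" using Ud(2) by blast
    thus "Re (e i) \<ge> 0" unfolding e_def by simp
  qed (simp add: e_def)
  have ee: "diag_cmat n e * diag_cmat n e = diag_cmat n d" unfolding diag_cmat_mult
  proof (rule diag_cmat_cong)
    fix i assume i: "i < n"
    hence di: "d i = of_real (Re (d i))" "Re (d i) \<ge> 0" using Ud(2) by auto
    have "e i * e i = of_real (sqrt (Re (d i)) * sqrt (Re (d i)))" unfolding e_def by (simp only: of_real_mult)
    also have "\<dots> = of_real (Re (d i))" using di(2) by simp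
    finally show "e i * e i = d i" using di(1) by simp
  qed
  define B where "B = U * diag_cmat n e * mat_adjoint U"
  note Bp = nonneg_op_of_spectral[OF Ud(1) e, folded B_def]
  have "B * B = U * (diag_cmat n e * (mat_adjoint U * (U * (diag_cmat n e * mat_adjoint U))))"
    unfolding B_def using Uc aU by (simp add: square_mat_mult_simps[where n=n])
  also have "mat_adjoint U * (U * (diag_cmat n e * mat_adjoint U)) = diag_cmat n e * mat_adjoint U"
    by (rule unitary_cancel(1)[OF Ud(1)], use aU in auto)
  also have "U * (diag_cmat n e * (diag_cmat n e * mat_adjoint U)) = A"
    unfolding Ud(3) using Uc aU ee[symmetric] by (simp add: square_mat_mult_simps[where n=n])
  finally show ?thesis using Bp by blast
qed

lemma nonneg_op_kernel: assumes B: "nonneg_op B" "B \<in> carrier_mat n n" and x: "x \<in> carrier_vec n"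
  and q: "Re ((B *\<^sub>v x) \<bullet>c x) = 0"
  shows "B *\<^sub>v x = 0\<^sub>v n"
proof -
  obtain S where S: "nonneg_op S" "S \<in> carrier_mat n n" "S * S = B" using nonneg_op_sqrt_exists[OF B] by blast
  have Sx: "S *\<^sub>v x \<in> carrier_vec n" using S(2) x by simp
  have "(B *\<^sub>v x) \<bullet>c x = (S *\<^sub>v (S *\<^sub>v x)) \<bullet>c x" unfolding S(3)[symmetric] using S(2) x by simp
  also have "\<dots> = (S *\<^sub>v x) \<bullet>c (S *\<^sub>v x)" using mat_adjoint_shift[OF S(2) Sx x] nonneg_opD(1)[OF S(1,2)] by simp
  finally have "(S *\<^sub>v x) \<bullet>c (S *\<^sub>v x) = (B *\<^sub>v x) \<bullet>c x" ..
  moreover have "(B *\<^sub>v x) \<bullet>c x = of_real (Re ((B *\<^sub>v x) \<bullet>c x))"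
    using hermitian_quadratic_form_real[OF B(2) nonneg_opD(1)[OF B] x] .
  ultimately have "(S *\<^sub>v x) \<bullet>c (S *\<^sub>v x) = 0" using q by simp
  hence "S *\<^sub>v x = 0\<^sub>v n" using Sx by simp
  hence "S *\<^sub>v (S *\<^sub>v x) = 0\<^sub>v n" using S(2) by (intro eq_vecI, auto)
  thus ?thesis unfolding S(3)[symmetric] using S(2) x by simp
qed

lemma cscalar_prod_add_minus: assumes "a \<in> carrier_vec n" "c \<in> carrier_vec n"
  shows "(a + c) \<bullet>c (a - c) = (a \<bullet>c a - c \<bullet>c c) + (c \<bullet>c a - a \<bullet>c (c :: complex vec))"
  using assms by (simp add: cscalar_prod_sum[of _ n] algebra_simps sum.distrib sum_subtractf)

text \<open>The real part of \<open>(a + c) \<bullet>c (a - c)\<close> with \<open>a = B x\<close>, \<open>c = C x\<close> vanishes because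
  \<open>B\<^sup>2 = C\<^sup>2\<close>, while it equals \<open>L (\<langle>B x, x\<rangle> + \<langle>C x, x\<rangle>)\<close>; if \<open>L \<noteq> 0\<close> both quadratic forms vanish,
  hence so do \<open>B x\<close> and \<open>C x\<close>.\<close>

lemma nonneg_op_sq_eq_eigenvalue_zero:
  assumes B: "nonneg_op B" "B \<in> carrier_mat n n" and C: "nonneg_op C" "C \<in> carrier_mat n n"
    and BC: "B * B = C * C" and x: "x \<in> carrier_vec n" "x \<bullet>c x = 1"
    and eigen: "(B - C) *\<^sub>v x = complex_of_real L \<cdot>\<^sub>v x"
  shows "L = 0"
proof (rule ccontr)
  assume "L \<noteq> 0"
  have hB: "mat_adjoint B = B" and hC: "mat_adjoint C = C" using nonneg_opD(1) B C by auto
  define a where "a = B *\<^sub>v x"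
  define c where "c = C *\<^sub>v x"
  have ac: "a \<in> carrier_vec n" "c \<in> carrier_vec n" unfolding a_def c_def using B C x by auto
  have Dx: "a - c = complex_of_real L \<cdot>\<^sub>v x"
    unfolding a_def c_def using eigen B(2) C(2) x by (simp add: minus_mult_distrib_mat_vec)
  have aa: "a \<bullet>c a = (B *\<^sub>v a) \<bullet>c x" using mat_adjoint_shift[OF B(2) ac(1) x(1)] hB unfolding a_def by simp
  have cc: "c \<bullet>c c = (C *\<^sub>v c) \<bullet>c x" using mat_adjoint_shift[OF C(2) ac(2) x(1)] hC unfolding c_def by simp
  have "B *\<^sub>v a = (B * B) *\<^sub>v x" unfolding a_def using B(2) x by simp
  also have "\<dots> = C *\<^sub>v c" unfolding BC c_def using C(2) x by simp
  finally have "a \<bullet>c a = c \<bullet>c c" using aa cc by simp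
  hence "(a + c) \<bullet>c (a - c) = c \<bullet>c a - a \<bullet>c c" using cscalar_prod_add_minus[OF ac] by simp
  hence re0: "Re ((a + c) \<bullet>c (a - c)) = 0" using cscalar_prod_swap[OF ac(2,1)] by simp
  obtain ra where ra: "a \<bullet>c x = of_real ra" "ra \<ge> 0"
    using hermitian_quadratic_form_real[OF B(2) hB x(1)] nonneg_opD(2)[OF B x(1)] unfolding a_def by blast
  obtain rc where rc: "c \<bullet>c x = of_real rc" "rc \<ge> 0"
    using hermitian_quadratic_form_real[OF C(2) hC x(1)] nonneg_opD(2)[OF C x(1)] unfolding c_def by blast
  have "(a + c) \<bullet>c (a - c) = (a + c) \<bullet> (complex_of_real L \<cdot>\<^sub>v conjugate x)"
    unfolding Dx by (simp add: conjugate_smult_vec)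
  also have "\<dots> = complex_of_real L * ((a + c) \<bullet>c x)" using ac x by (simp add: scalar_prod_smult_distrib[of _ n])
  also have "(a + c) \<bullet>c x = a \<bullet>c x + c \<bullet>c x" using ac x by (simp add: add_scalar_prod_distrib[of _ n])
  finally have "L * (ra + rc) = 0" using re0 unfolding ra rc by simp
  hence "Re ((B *\<^sub>v x) \<bullet>c x) = 0" "Re ((C *\<^sub>v x) \<bullet>c x) = 0"
    using \<open>L \<noteq> 0\<close> ra rc unfolding a_def c_def by auto
  hence "a - c = 0\<^sub>v n" unfolding a_def c_def using nonneg_op_kernel[OF B x(1)] nonneg_op_kernel[OF C x(1)] by simp
  hence "(complex_of_real L \<cdot>\<^sub>v x) \<bullet>c x = 0" unfolding Dx using x by (simp add: cscalar_prod_sum[of _ n])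
  thus False using x \<open>L \<noteq> 0\<close> by (simp add: smult_scalar_prod_distrib[of _ n])
qed

lemma nonneg_op_sqrt_unique:
  assumes B: "nonneg_op B" "B \<in> carrier_mat n n" and C: "nonneg_op C" "C \<in> carrier_mat n n"
    and BC: "B * B = C * C"
  shows "B = C"
proof -
  have Dc: "B - C \<in> carrier_mat n n" using C(2) by (rule minus_carrier_mat)
  have "mat_adjoint (B - C) = B - C" using mat_adjoint_minus[OF B(2) C(2)] nonneg_opD(1) B C by simp
  then obtain V l where V: "unitary V n" and l: "\<forall>i<n. l i = of_real (Re (l i))"
    and D: "B - C = V * diag_cmat n l * mat_adjoint V"
    using hermitian_spectral[OF Dc] by blast
  have "l k = 0" if k: "k < n" for k
  proof -
    note col = unitary_col_eigenvector(1)[OF V k, of l, folded D] unitary_col_eigenvector(2,3)[OF V k]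
    have lk: "l k = complex_of_real (Re (l k))" using l k by blast
    have "(B - C) *\<^sub>v col V k = complex_of_real (Re (l k)) \<cdot>\<^sub>v col V k" using col(1) lk by metis
    hence "Re (l k) = 0" by (rule nonneg_op_sq_eq_eigenvalue_zero[OF B C BC col(3,2)])
    thus ?thesis using lk by (metis of_real_0)
  qed
  hence "B - C = V * diag_cmat n (\<lambda>_. 0) * mat_adjoint V" unfolding D by (metis diag_cmat_cong)
  also have "\<dots> = 0\<^sub>m n n" using V unfolding diag_cmat_zero unitary_def by auto
  finally have "B - C = 0\<^sub>m n n" .
  show ?thesis
  proof (rule eq_matI)
    fix i j assume ij: "i < dim_row C" "j < dim_col C"
    have "(B - C) $$ (i,j) = 0" using \<open>B - C = 0\<^sub>m n n\<close> ij C(2) by simp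
    thus "B $$ (i,j) = C $$ (i,j)" using ij B(2) C(2) by simp
  qed (use B(2) C(2) in auto)
qed

lemma op_sqrt_eq: assumes B: "nonneg_op B" "B \<in> carrier_mat n n" and A: "B * B = A"
  shows "op_sqrt A = B"
  unfolding op_sqrt_def
proof (rule the1_equality)
  have dA: "dim_row A = n" using A B(2) by auto
  show "\<exists>!X. nonneg_op X \<and> dim_row X = dim_row A \<and> X * X = A"
  proof (rule ex1I[of _ B])
    show "nonneg_op B \<and> dim_row B = dim_row A \<and> B * B = A" using B A dA by auto
    fix X assume X: "nonneg_op X \<and> dim_row X = dim_row A \<and> X * X = A"
    have "X \<in> carrier_mat (dim_row X) (dim_row X)" using X unfolding nonneg_op_def by blast
    hence Xc: "X \<in> carrier_mat n n" using dA X by simp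
    have "X * X = B * B" using X A by simp
    thus "X = B" by (rule nonneg_op_sqrt_unique[OF conjunct1[OF X] Xc B])
  qed
  show "nonneg_op B \<and> dim_row B = dim_row A \<and> B * B = A" using B A dA by auto
qed

lemma op_sqrt_spec: assumes A: "nonneg_op A" "A \<in> carrier_mat n n"
  shows "nonneg_op (op_sqrt A)" "op_sqrt A \<in> carrier_mat n n" "op_sqrt A * op_sqrt A = A"
proof -
  obtain B where B: "nonneg_op B" "B \<in> carrier_mat n n" "B * B = A" using nonneg_op_sqrt_exists[OF A] by blast
  have "op_sqrt A = B" by (rule op_sqrt_eq[OF B])
  thus "nonneg_op (op_sqrt A)" "op_sqrt A \<in> carrier_mat n n" "op_sqrt A * op_sqrt A = A" using B by auto
qed

section \<open>Trace inequalities\<close>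

lemma nonneg_op_adjoint_mult: assumes Y: "Y \<in> carrier_mat n n"
  shows "nonneg_op (mat_adjoint Y * Y)" "mat_adjoint Y * Y \<in> carrier_mat n n"
proof -
  have aY: "mat_adjoint Y \<in> carrier_mat n n" using Y by auto
  show c: "mat_adjoint Y * Y \<in> carrier_mat n n" using Y aY by auto
  have h: "mat_adjoint (mat_adjoint Y * Y) = mat_adjoint Y * Y" using mat_adjoint_mult[OF aY Y] by simp
  show "nonneg_op (mat_adjoint Y * Y)"
  proof (rule nonneg_opI[OF c h])
    fix v :: "complex vec" assume v: "v \<in> carrier_vec n"
    have Yv: "Y *\<^sub>v v \<in> carrier_vec n" using Y v by simp
    have "(mat_adjoint Y * Y *\<^sub>v v) \<bullet>c v = (mat_adjoint Y *\<^sub>v (Y *\<^sub>v v)) \<bullet>c v"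
      using aY Y v by (simp add: assoc_mult_mat_vec[of _ n n _ n])
    also have "\<dots> = (Y *\<^sub>v v) \<bullet>c (Y *\<^sub>v v)" using mat_adjoint_shift[OF aY Yv v] by simp
    finally show "Re ((mat_adjoint Y * Y *\<^sub>v v) \<bullet>c v) \<ge> 0"
      using cscalar_prod_self_real[OF Yv] by simp
  qed
qed

lemma nonneg_op_trace_nonneg: assumes "nonneg_op N" "N \<in> carrier_mat n n"
  shows "Re (cmat_trace N) \<ge> 0"
proof -
  have "Re (cmat_trace N) = (\<Sum>i<n. Re ((N *\<^sub>v unit_vec n i) \<bullet>c unit_vec n i))"
    unfolding cmat_trace_def Re_sum using assms(2)
  proof (intro sum.cong)
    fix i assume i: "i \<in> {..<n}"
    have "(N *\<^sub>v unit_vec n i) \<bullet>c unit_vec n i = (\<Sum>k<n. (N *\<^sub>v unit_vec n i) $ k * cnj (unit_vec n i $ k))"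
      using assms(2) by (intro cscalar_prod_sum, auto)
    also have "\<dots> = (\<Sum>k<n. if k = i then (N *\<^sub>v unit_vec n i) $ i else 0)"
      by (rule sum.cong, auto simp: unit_vec_def)
    also have "\<dots> = (N *\<^sub>v unit_vec n i) $ i" using i by simp
    also have "\<dots> = N $$ (i,i)" using i assms(2) by simp
    finally show "Re (N $$ (i,i)) = Re ((N *\<^sub>v unit_vec n i) \<bullet>c unit_vec n i)" by simp
  qed auto
  also have "\<dots> \<ge> 0" using nonneg_opD(2)[OF assms] by (intro sum_nonneg, simp)
  finally show ?thesis .
qed

lemma cmat_trace_mult_nonneg: assumes K: "nonneg_op K" "K \<in> carrier_mat n n" and L: "nonneg_op L" "L \<in> carrier_mat n n"
  shows "Re (cmat_trace (K * L)) \<ge> 0"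
proof -
  note Q = op_sqrt_spec[OF L]
  define Q where "Q = op_sqrt L"
  have Qc: "Q \<in> carrier_mat n n" and hQ: "mat_adjoint Q = Q" and QQ: "Q * Q = L"
    using Q nonneg_opD(1)[OF Q(1,2)] unfolding Q_def by auto
  have "cmat_trace (K * L) = cmat_trace (K * Q * Q)" unfolding QQ[symmetric] using K(2) Qc by simp
  also have "\<dots> = cmat_trace (Q * (K * Q))" using cmat_trace_mult_comm[of "K * Q" n n Q] K(2) Qc by simp
  also have "\<dots> = cmat_trace (mat_adjoint Q * K * Q)" using hQ K(2) Qc by simp
  finally have eq: "cmat_trace (K * L) = cmat_trace (mat_adjoint Q * K * Q)" .
  have c: "mat_adjoint Q * K * Q \<in> carrier_mat n n" using Qc K(2) by auto
  have "nonneg_op (mat_adjoint Q * K * Q)"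
  proof (rule nonneg_opI[OF c])
    show "mat_adjoint (mat_adjoint Q * K * Q) = mat_adjoint Q * K * Q"
      using mat_adjoint_mult[of "mat_adjoint Q * K" n n Q n] mat_adjoint_mult[of "mat_adjoint Q" n n K n] Qc K(2) nonneg_opD(1)[OF K] hQ
      by simp
    fix v :: "complex vec" assume v: "v \<in> carrier_vec n"
    have Qv: "Q *\<^sub>v v \<in> carrier_vec n" using Qc v by simp
    have "(mat_adjoint Q * K * Q *\<^sub>v v) = mat_adjoint Q *\<^sub>v (K *\<^sub>v (Q *\<^sub>v v))"
      using Qc K(2) v by (simp add: assoc_mult_mat_vec[of _ n n _ n] square_mat_mult_simps[where n=n])
    hence "(mat_adjoint Q * K * Q *\<^sub>v v) \<bullet>c v = (K *\<^sub>v (Q *\<^sub>v v)) \<bullet>c (Q *\<^sub>v v)"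
      using mat_adjoint_shift[of "mat_adjoint Q" n "K *\<^sub>v (Q *\<^sub>v v)" v] Qc K(2) Qv v by simp
    thus "Re ((mat_adjoint Q * K * Q *\<^sub>v v) \<bullet>c v) \<ge> 0" using nonneg_opD(2)[OF K Qv] by simp
  qed
  thus ?thesis using nonneg_op_trace_nonneg[OF _ c] eq by simp
qed

lemma sum_product_square_le: fixes a b :: "'a \<Rightarrow> real" assumes "finite I"
  shows "(\<Sum>i\<in>I. a i * b i)\<^sup>2 \<le> (\<Sum>i\<in>I. (a i)\<^sup>2) * (\<Sum>i\<in>I. (b i)\<^sup>2)"
proof -
  have "0 \<le> (\<Sum>i\<in>I. \<Sum>j\<in>I. (a i * b j - a j * b i)\<^sup>2)" by (intro sum_nonneg, simp)
  also have "\<dots> = (\<Sum>i\<in>I. \<Sum>j\<in>I. (a i)\<^sup>2 * (b j)\<^sup>2) + (\<Sum>i\<in>I. \<Sum>j\<in>I. (a j)\<^sup>2 * (b i)\<^sup>2)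
      - 2 * (\<Sum>i\<in>I. \<Sum>j\<in>I. (a i * b i) * (a j * b j))"
    by (simp add: power2_eq_square algebra_simps sum.distrib sum_subtractf sum_distrib_left)
  also have "(\<Sum>i\<in>I. \<Sum>j\<in>I. (a j)\<^sup>2 * (b i)\<^sup>2) = (\<Sum>i\<in>I. \<Sum>j\<in>I. (a i)\<^sup>2 * (b j)\<^sup>2)"
    by (subst sum.swap, simp)
  also have "(\<Sum>i\<in>I. \<Sum>j\<in>I. (a i)\<^sup>2 * (b j)\<^sup>2) = (\<Sum>i\<in>I. (a i)\<^sup>2) * (\<Sum>i\<in>I. (b i)\<^sup>2)"
    by (simp add: sum_product)
  also have "(\<Sum>i\<in>I. \<Sum>j\<in>I. (a i * b i) * (a j * b j)) = (\<Sum>i\<in>I. a i * b i)\<^sup>2"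
    by (simp add: sum_product power2_eq_square)
  finally show ?thesis by simp
qed

lemma Re_sum_cnj_mult_le: fixes a b :: "'a \<Rightarrow> complex" assumes "finite I"
  shows "Re (\<Sum>i\<in>I. cnj (a i) * b i) \<le> sqrt (\<Sum>i\<in>I. (cmod (a i))\<^sup>2) * sqrt (\<Sum>i\<in>I. (cmod (b i))\<^sup>2)"
proof -
  have "Re (\<Sum>i\<in>I. cnj (a i) * b i) \<le> (\<Sum>i\<in>I. cmod (a i) * cmod (b i))"
    unfolding Re_sum
  proof (rule sum_mono)
    fix i show "Re (cnj (a i) * b i) \<le> cmod (a i) * cmod (b i)"
      using complex_Re_le_cmod[of "cnj (a i) * b i"] by (simp add: norm_mult)
  qed
  also have "\<dots> \<le> sqrt ((\<Sum>i\<in>I. cmod (a i) * cmod (b i))\<^sup>2)" by simp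
  also have "\<dots> \<le> sqrt ((\<Sum>i\<in>I. (cmod (a i))\<^sup>2) * (\<Sum>i\<in>I. (cmod (b i))\<^sup>2))"
    by (rule real_sqrt_le_mono, rule sum_product_square_le[OF assms])
  also have "\<dots> = sqrt (\<Sum>i\<in>I. (cmod (a i))\<^sup>2) * sqrt (\<Sum>i\<in>I. (cmod (b i))\<^sup>2)" by (simp add: real_sqrt_mult)
  finally show ?thesis .
qed

lemma cmat_trace_adjoint_mult_sum: assumes "A \<in> carrier_mat n m" "B \<in> carrier_mat n m"
  shows "cmat_trace (mat_adjoint A * B) = (\<Sum>p\<in>{..<m} \<times> {..<n}. cnj (A $$ (snd p, fst p)) * B $$ (snd p, fst p))"
  using assms by (simp add: cmat_trace_def scalar_prod_def atLeast0LessThan sum.cartesian_product case_prod_beta)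

lemma cmat_trace_adjoint_mult_Cauchy_Schwarz: assumes A: "A \<in> carrier_mat n m" and B: "B \<in> carrier_mat n m"
  shows "Re (cmat_trace (mat_adjoint A * B)) \<le> sqrt (Re (cmat_trace (mat_adjoint A * A))) * sqrt (Re (cmat_trace (mat_adjoint B * B)))"
proof -
  have sq: "Re (cmat_trace (mat_adjoint C * C)) = (\<Sum>p\<in>{..<m} \<times> {..<n}. (cmod (C $$ (snd p, fst p)))\<^sup>2)"
    if C: "C \<in> carrier_mat n m" for C
    unfolding cmat_trace_adjoint_mult_sum[OF C C] Re_sum
    by (rule sum.cong, simp_all add: mult.commute complex_mult_cnj cmod_def)
  show ?thesis unfolding cmat_trace_adjoint_mult_sum[OF A B] sq[OF A] sq[OF B]
    by (rule Re_sum_cnj_mult_le, simp)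
qed

lemma cmat_trace_unitary_conj: assumes U: "unitary U n" and D: "D \<in> carrier_mat n n"
  shows "cmat_trace (U * D * mat_adjoint U) = cmat_trace D"
proof -
  have Uc: "U \<in> carrier_mat n n" and aU: "mat_adjoint U \<in> carrier_mat n n" and UU: "mat_adjoint U * U = 1\<^sub>m n"
    using U unfolding unitary_def by auto
  have "cmat_trace (U * D * mat_adjoint U) = cmat_trace (mat_adjoint U * (U * D))"
    by (rule cmat_trace_mult_comm[of "U * D" n n "mat_adjoint U"]) (use Uc D aU in \<open>auto intro: mult_carrier_mat\<close>)
  also have "mat_adjoint U * (U * D) = D" by (rule unitary_cancel(1)[OF U D])
  finally show ?thesis .
qed

lemma nonneg_op_spectral_real: assumes A: "nonneg_op A" "A \<in> carrier_mat n n"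
  shows "\<exists>U r. unitary U n \<and> (\<forall>i<n. r i \<ge> 0) \<and> A = U * diag_cmat n (\<lambda>i. of_real (r i)) * mat_adjoint U"
proof -
  obtain U d where Ud: "unitary U n" "\<forall>i<n. d i = of_real (Re (d i)) \<and> Re (d i) \<ge> 0" "A = U * diag_cmat n d * mat_adjoint U"
    using nonneg_op_spectral[OF A] by blast
  have "diag_cmat n d = diag_cmat n (\<lambda>i. of_real (Re (d i)))" by (rule diag_cmat_cong, insert Ud(2), blast)
  thus ?thesis using Ud by (intro exI[of _ U] exI[of _ "\<lambda>i. Re (d i)"], auto)
qed

lemma mat_adjoint_diag_cmat_real: "mat_adjoint (diag_cmat n (\<lambda>i. complex_of_real (r i))) = diag_cmat n (\<lambda>i. complex_of_real (r i))"
  unfolding mat_adjoint_diag_cmat by simp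

section \<open>Fidelity and two-outcome measurements\<close>

lemma nonneg_op_one_minus_projection:
  assumes P: "P \<in> carrier_mat n n" "mat_adjoint P = P" "P * P = P"
  shows "nonneg_op (1\<^sub>m n - P)"
proof -
  have I: "1\<^sub>m n - P \<in> carrier_mat n n" using P(1) by (rule minus_carrier_mat)
  have "mat_adjoint (1\<^sub>m n - P) = 1\<^sub>m n - P"
    using mat_adjoint_minus[OF one_carrier_mat P(1)] P(2) by simp
  moreover have "(1\<^sub>m n - P) * (1\<^sub>m n - P) = 1\<^sub>m n - P"
  proof -
    have "(1\<^sub>m n - P) * (1\<^sub>m n - P) = (1\<^sub>m n - P) * 1\<^sub>m n - (1\<^sub>m n - P) * P"
      by (rule mult_minus_distrib_mat[OF I one_carrier_mat P(1)])
    also have "(1\<^sub>m n - P) * P = 1\<^sub>m n * P - P * P"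
      by (rule minus_mult_distrib_mat[OF one_carrier_mat P(1) P(1)])
    finally show ?thesis using P(1,3) I by (auto intro!: eq_matI)
  qed
  ultimately show ?thesis using nonneg_op_adjoint_mult(1)[OF I] by simp
qed

lemma partial_isometry_of_diag_gram:
  assumes X: "X \<in> carrier_mat n n" and D: "D = diag_cmat n (\<lambda>i. complex_of_real (r i))"
    and XX: "mat_adjoint X * X = D * D"
  shows "\<exists>\<Phi> \<in> carrier_mat n n. mat_adjoint \<Phi> * X = D \<and>
    \<Phi> * mat_adjoint \<Phi> * (\<Phi> * mat_adjoint \<Phi>) = \<Phi> * mat_adjoint \<Phi>"
proof -
  define pinv where "pinv = diag_cmat n (\<lambda>i. complex_of_real (if r i = 0 then 0 else 1 / r i))"
  define supp where "supp = diag_cmat n (\<lambda>i. complex_of_real (if r i = 0 then 0 else 1))"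
  define \<Phi> where "\<Phi> = X * pinv"
  have pinv: "pinv \<in> carrier_mat n n" "mat_adjoint pinv = pinv"
    unfolding pinv_def by (simp_all only: diag_cmat_carrier mat_adjoint_diag_cmat_real)
  have \<Phi>: "\<Phi> \<in> carrier_mat n n" "mat_adjoint \<Phi> \<in> carrier_mat n n" unfolding \<Phi>_def using X pinv by auto
  have adj\<Phi>: "mat_adjoint \<Phi> = pinv * mat_adjoint X"
    unfolding \<Phi>_def mat_adjoint_mult[OF X pinv(1)] pinv(2) ..
  have "mat_adjoint \<Phi> * X = pinv * (D * D)"
    unfolding adj\<Phi> XX[symmetric] using X pinv by (simp add: square_mat_mult_simps[where n=n])
  also have "\<dots> = D" unfolding D pinv_def diag_cmat_mult by (rule diag_cmat_cong) auto
  finally have \<Phi>X: "mat_adjoint \<Phi> * X = D" .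
  have "mat_adjoint \<Phi> * \<Phi> = D * pinv"
    unfolding \<Phi>X[symmetric] \<Phi>_def using X pinv \<Phi> by (simp add: square_mat_mult_simps[where n=n])
  also have "\<dots> = supp" unfolding D pinv_def supp_def diag_cmat_mult by (rule diag_cmat_cong) auto
  finally have \<Phi>\<Phi>: "mat_adjoint \<Phi> * \<Phi> = supp" .
  have "\<Phi> * supp = X * (pinv * supp)" unfolding \<Phi>_def supp_def using X pinv
    by (simp add: square_mat_mult_simps[where n=n])
  also have "pinv * supp = pinv" unfolding pinv_def supp_def diag_cmat_mult
    by (rule diag_cmat_cong) auto
  finally have "\<Phi> * supp = \<Phi>" unfolding \<Phi>_def .
  moreover have "\<Phi> * mat_adjoint \<Phi> * (\<Phi> * mat_adjoint \<Phi>) = \<Phi> * supp * mat_adjoint \<Phi>"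
    unfolding \<Phi>\<Phi>[symmetric] using \<Phi> by (simp add: square_mat_mult_simps[where n=n])
  ultimately have "\<Phi> * mat_adjoint \<Phi> * (\<Phi> * mat_adjoint \<Phi>) = \<Phi> * mat_adjoint \<Phi>" by simp
  with \<Phi> \<Phi>X show ?thesis by blast
qed

text \<open>\<open>W\<close> is the adjoint of the partial isometry in the polar decomposition of \<open>M\<close>.\<close>

lemma trace_norm_eq_Re_trace_contraction:
  assumes M: "M \<in> carrier_mat n n"
  shows "\<exists>W \<in> carrier_mat n n. nonneg_op (1\<^sub>m n - mat_adjoint W * W) \<and>
    trace_norm M = Re (cmat_trace (W * M))"
proof -
  note G = nonneg_op_adjoint_mult[OF M]
  define P where "P = op_sqrt (mat_adjoint M * M)"
  note P = op_sqrt_spec[OF G, folded P_def]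
  obtain V r where V: "unitary V n" and r: "\<forall>i<n. r i \<ge> 0"
    and PV: "P = V * diag_cmat n (\<lambda>i. complex_of_real (r i)) * mat_adjoint V"
    using nonneg_op_spectral_real[OF P(1,2)] by blast
  define D where "D = diag_cmat n (\<lambda>i. complex_of_real (r i))"
  have Vc: "V \<in> carrier_mat n n" "mat_adjoint V \<in> carrier_mat n n" "mat_adjoint V * V = 1\<^sub>m n"
    using V unfolding unitary_def by auto
  have Dc: "D \<in> carrier_mat n n" unfolding D_def by simp
  have PV': "P * V = V * D"
    unfolding PV D_def[symmetric] using Vc Dc right_mult_one_mat[OF Dc]
    by (simp add: square_mat_mult_simps[where n=n])
  have PPV: "P * P * V = V * (D * D)"
  proof -
    have "P * P * V = P * (P * V)" by (rule assoc_mult_mat[OF P(2) P(2) Vc(1)])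
    also have "\<dots> = P * (V * D)" by (simp only: PV')
    also have "\<dots> = P * V * D" using assoc_mult_mat[OF P(2) Vc(1) Dc] by simp
    also have "\<dots> = V * D * D" by (simp only: PV')
    also have "\<dots> = V * (D * D)" by (rule assoc_mult_mat[OF Vc(1) Dc Dc])
    finally show ?thesis .
  qed
  have "mat_adjoint (M * V) * (M * V) = mat_adjoint V * (P * P * V)"
    unfolding mat_adjoint_mult[OF M Vc(1)] P(3) using M Vc by (simp add: square_mat_mult_simps[where n=n])
  also have "\<dots> = D * D" unfolding PPV using unitary_cancel(1)[OF V, of "D * D" n] Dc by simp
  finally obtain \<Phi> where \<Phi>: "\<Phi> \<in> carrier_mat n n" "mat_adjoint \<Phi> * (M * V) = D"
    and proj: "\<Phi> * mat_adjoint \<Phi> * (\<Phi> * mat_adjoint \<Phi>) = \<Phi> * mat_adjoint \<Phi>"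
    using partial_isometry_of_diag_gram[OF mult_carrier_mat[OF M Vc(1)] D_def] by blast
  define W where "W = V * mat_adjoint \<Phi>"
  have Wc: "W \<in> carrier_mat n n" unfolding W_def using Vc \<Phi> by auto
  have "mat_adjoint W * W = \<Phi> * mat_adjoint \<Phi>"
    unfolding W_def mat_adjoint_mult[OF Vc(1) mat_adjoint_carrier[OF \<Phi>(1)]]
    using Vc \<Phi> unitary_cancel(1)[OF V mat_adjoint_carrier[OF \<Phi>(1)]]
    by (simp add: square_mat_mult_simps[where n=n])
  moreover have "mat_adjoint (\<Phi> * mat_adjoint \<Phi>) = \<Phi> * mat_adjoint \<Phi>"
    using mat_adjoint_mult[OF \<Phi>(1) mat_adjoint_carrier[OF \<Phi>(1)]] by simp
  ultimately have "nonneg_op (1\<^sub>m n - mat_adjoint W * W)"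
    using nonneg_op_one_minus_projection[OF mult_carrier_mat[OF \<Phi>(1) mat_adjoint_carrier[OF \<Phi>(1)]] _ proj]
    by simp
  moreover have "cmat_trace (W * M) = cmat_trace P"
  proof -
    have "cmat_trace (W * M) = cmat_trace (mat_adjoint \<Phi> * (M * V))"
      unfolding W_def using cmat_trace_mult_comm[of V n n "mat_adjoint \<Phi> * M"] Vc \<Phi> M
      by (simp add: square_mat_mult_simps[where n=n])
    thus ?thesis unfolding \<Phi>(2) PV D_def cmat_trace_unitary_conj[OF V diag_cmat_carrier] .
  qed
  ultimately show ?thesis using Wc unfolding trace_norm_def P_def by auto
qed

lemma Re_trace_contraction_le:
  assumes W: "W \<in> carrier_mat n n" "nonneg_op (1\<^sub>m n - mat_adjoint W * W)"
    and S: "S \<in> carrier_mat n n" "mat_adjoint S = S" and T: "T \<in> carrier_mat n n" "mat_adjoint T = T"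
    and E: "nonneg_op E" "E \<in> carrier_mat n n"
  shows "Re (cmat_trace (W * (S * E * T)))
    \<le> sqrt (Re (cmat_trace (E * (S * S)))) * sqrt (Re (cmat_trace (E * (T * T))))"
proof -
  define R where "R = op_sqrt E"
  note R = op_sqrt_spec[OF E, folded R_def]
  have Rc: "R \<in> carrier_mat n n" "mat_adjoint R = R" using R nonneg_opD(1)[OF R(1,2)] by auto
  define A where "A = R * S * mat_adjoint W"
  define B where "B = R * T"
  have Ac: "A \<in> carrier_mat n n" and Bc: "B \<in> carrier_mat n n" unfolding A_def B_def using Rc S T W by auto
  have adjA: "mat_adjoint A = W * (S * R)" unfolding A_def
    using mat_adjoint_mult[of "R * S" n n "mat_adjoint W" n] mat_adjoint_mult[OF Rc(1) S(1)] Rc S W by simp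
  have ERR: "R * R = E" by (rule R(3))
  have AB: "mat_adjoint A * B = W * (S * E * T)"
    unfolding adjA B_def ERR[symmetric] using W Rc S T by (simp add: square_mat_mult_simps[where n=n])
  define K where "K = S * E * S"
  have K: "nonneg_op K" "K \<in> carrier_mat n n"
  proof -
    have "K = mat_adjoint (R * S) * (R * S)" unfolding K_def ERR[symmetric] mat_adjoint_mult[OF Rc(1) S(1)]
      using Rc S by (simp add: square_mat_mult_simps[where n=n])
    thus "nonneg_op K" "K \<in> carrier_mat n n" using nonneg_op_adjoint_mult[of "R * S" n] Rc S by auto
  qed
  have WW: "mat_adjoint W * W \<in> carrier_mat n n" using W by auto
  have "K * (1\<^sub>m n - mat_adjoint W * W) = K - K * (mat_adjoint W * W)"
    using mult_minus_distrib_mat[OF K(2) one_carrier_mat WW] K(2) by simp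
  hence KWW: "Re (cmat_trace (K * (mat_adjoint W * W))) \<le> Re (cmat_trace K)"
    using cmat_trace_mult_nonneg[OF K W(2) minus_carrier_mat[OF WW]]
      cmat_trace_minus[of K n "K * (mat_adjoint W * W)"] K(2) WW by simp
  have "cmat_trace (mat_adjoint A * A) = cmat_trace (K * (mat_adjoint W * W))"
    unfolding adjA unfolding A_def K_def ERR[symmetric]
    using cmat_trace_mult_comm[of W n n "S * R * (R * S) * mat_adjoint W"] W Rc S
    by (simp add: square_mat_mult_simps[where n=n])
  hence "Re (cmat_trace (mat_adjoint A * A)) \<le> Re (cmat_trace K)" using KWW by simp
  also have "cmat_trace K = cmat_trace (E * (S * S))"
    unfolding K_def using cmat_trace_mult_comm[of S n n "E * S"] S E by (simp add: square_mat_mult_simps[where n=n])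
  finally have AA: "Re (cmat_trace (mat_adjoint A * A)) \<le> Re (cmat_trace (E * (S * S)))" .
  have "cmat_trace (mat_adjoint B * B) = cmat_trace (E * (T * T))"
    unfolding B_def mat_adjoint_mult[OF Rc(1) T(1)] ERR[symmetric] Rc(2) T(2)
    using cmat_trace_mult_comm[of T n n "R * R * T"] Rc T by (simp add: square_mat_mult_simps[where n=n])
  with AA cmat_trace_adjoint_mult_Cauchy_Schwarz[OF Ac Bc] nonneg_op_trace_nonneg[OF nonneg_op_adjoint_mult[OF Bc]]
  show ?thesis unfolding AB by (smt (verit) mult_right_mono real_sqrt_ge_zero real_sqrt_le_mono)
qed

lemma fidelity_le_two_outcome_measurement:
  assumes \<rho>1: "nonneg_op \<rho>1" "\<rho>1 \<in> carrier_mat n n" and \<rho>2: "nonneg_op \<rho>2" "\<rho>2 \<in> carrier_mat n n"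
    and E1: "nonneg_op E1" "E1 \<in> carrier_mat n n" and E2: "nonneg_op E2" "E2 \<in> carrier_mat n n"
    and E12: "E1 + E2 = 1\<^sub>m n"
  shows "fidelity \<rho>1 \<rho>2 \<le> sqrt (Re (cmat_trace (E1 * \<rho>1))) * sqrt (Re (cmat_trace (E1 * \<rho>2)))
    + sqrt (Re (cmat_trace (E2 * \<rho>1))) * sqrt (Re (cmat_trace (E2 * \<rho>2)))"
proof -
  define S where "S = op_sqrt \<rho>1"
  define T where "T = op_sqrt \<rho>2"
  note S = op_sqrt_spec[OF \<rho>1, folded S_def] and T = op_sqrt_spec[OF \<rho>2, folded T_def]
  have S': "S \<in> carrier_mat n n" "mat_adjoint S = S" using S nonneg_opD(1)[OF S(1,2)] by auto
  have T': "T \<in> carrier_mat n n" "mat_adjoint T = T" using T nonneg_opD(1)[OF T(1,2)] by auto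
  obtain W where W: "W \<in> carrier_mat n n" "nonneg_op (1\<^sub>m n - mat_adjoint W * W)"
    and F: "trace_norm (S * T) = Re (cmat_trace (W * (S * T)))"
    using trace_norm_eq_Re_trace_contraction[OF mult_carrier_mat[OF S'(1) T'(1)]] by blast
  have SE: "S * E1 * T \<in> carrier_mat n n" "S * E2 * T \<in> carrier_mat n n" using S' T' E1 E2 by auto
  have "S * T = S * (E1 + E2) * T" unfolding E12 using right_mult_one_mat[OF S'(1)] by simp
  also have "\<dots> = S * E1 * T + S * E2 * T"
    unfolding mult_add_distrib_mat[OF S'(1) E1(2) E2(2)]
    by (rule add_mult_distrib_mat[OF mult_carrier_mat[OF S'(1) E1(2)] mult_carrier_mat[OF S'(1) E2(2)] T'(1)])
  finally have "W * (S * T) = W * (S * E1 * T) + W * (S * E2 * T)"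
    using mult_add_distrib_mat[OF W(1) SE] by simp
  hence "fidelity \<rho>1 \<rho>2 = Re (cmat_trace (W * (S * E1 * T))) + Re (cmat_trace (W * (S * E2 * T)))"
    unfolding fidelity_def S_def[symmetric] T_def[symmetric] F
    using cmat_trace_add[OF mult_carrier_mat[OF W(1) SE(1)] mult_carrier_mat[OF W(1) SE(2)]] by simp
  thus ?thesis
    using Re_trace_contraction_le[OF W S' T' E1] Re_trace_contraction_le[OF W S' T' E2]
    unfolding S(3) T(3) by linarith
qed

lemma bhattacharyya_le: fixes p q :: real
  assumes p: "0 \<le> p" "p \<le> 1" and q: "0 \<le> q" "q \<le> 1"
  shows "(sqrt (q * p) + sqrt ((1 - q) * (1 - p)))\<^sup>2 \<le> 1 - (p - q)\<^sup>2"
proof -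
  define u where "u = sqrt (p * (1 - p))"
  define w where "w = sqrt (q * (1 - q))"
  have u2: "u\<^sup>2 = p * (1 - p)" unfolding u_def using p by simp
  have w2: "w\<^sup>2 = q * (1 - q)" unfolding w_def using q by simp
  have sq: "sqrt (q * p) * sqrt ((1 - q) * (1 - p)) = u * w"
  proof -
    have "sqrt (q * p) * sqrt ((1 - q) * (1 - p)) = sqrt ((q * p) * ((1 - q) * (1 - p)))" by (simp only: real_sqrt_mult)
    also have "(q * p) * ((1 - q) * (1 - p)) = (p * (1 - p)) * (q * (1 - q))" by (simp add: mult_ac)
    also have "sqrt \<dots> = u * w" unfolding u_def w_def by (simp only: real_sqrt_mult)
    finally show ?thesis .
  qed
  have a2: "(sqrt (q * p))\<^sup>2 = q * p" using p q by simp
  have b2: "(sqrt ((1 - q) * (1 - p)))\<^sup>2 = (1 - q) * (1 - p)" using p q by simp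
  have "(sqrt (q * p) + sqrt ((1 - q) * (1 - p)))\<^sup>2 = q * p + (1 - q) * (1 - p) + 2 * (u * w)"
    unfolding power2_sum a2 b2 mult.assoc sq by simp
  also have "\<dots> \<le> 1 - (p - q)\<^sup>2"
  proof -
    have "0 \<le> (u - w)\<^sup>2" by simp
    hence "2 * (u * w) \<le> u\<^sup>2 + w\<^sup>2" by (simp add: power2_diff)
    thus ?thesis unfolding u2 w2 by (simp add: power2_diff algebra_simps power2_eq_square)
  qed
  finally show ?thesis .
qed

lemma prob_diff_le_of_fidelity: fixes p q1 q2 F e :: real
  assumes p: "0 \<le> p" "p \<le> 1" and q: "0 \<le> q1" "0 \<le> q2" "q1 + q2 \<le> 1"
    and F: "F \<le> sqrt (q1 * p) + sqrt (q2 * (1 - p))" and F0: "0 \<le> F" and Fe: "1 - F\<^sup>2 \<le> e\<^sup>2" and e: "0 \<le> e"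
  shows "p - q1 \<le> e"
proof -
  have s: "sqrt (q2 * (1 - p)) \<le> sqrt ((1 - q1) * (1 - p))"
    using q p by (intro real_sqrt_le_mono mult_right_mono, auto)
  have F': "F \<le> sqrt (q1 * p) + sqrt ((1 - q1) * (1 - p))" using F s by linarith
  have "F\<^sup>2 \<le> (sqrt (q1 * p) + sqrt ((1 - q1) * (1 - p)))\<^sup>2"
    using F' F0 by (intro power_mono, auto)
  also have "\<dots> \<le> 1 - (p - q1)\<^sup>2" using bhattacharyya_le[OF p, of q1] q by simp
  finally have "(p - q1)\<^sup>2 \<le> e\<^sup>2" using Fe by simp
  thus ?thesis using e by (metis abs_le_square_iff abs_le_D1 abs_of_nonneg)
qed

lemma nonneg_op_zero: "nonneg_op (0\<^sub>m n n :: complex mat)"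
proof (rule nonneg_opI[of _ n])
  fix v :: "complex vec" assume v: "v \<in> carrier_vec n"
  have "0\<^sub>m n n *\<^sub>v v = 0\<^sub>v n" using v by (intro eq_vecI, auto)
  thus "Re ((0\<^sub>m n n *\<^sub>v v) \<bullet>c v) \<ge> 0" using v by simp
qed auto

lemma nonneg_op_one: "nonneg_op (1\<^sub>m n :: complex mat)"
proof (rule nonneg_opI[of _ n])
  fix v :: "complex vec" assume v: "v \<in> carrier_vec n"
  show "Re ((1\<^sub>m n *\<^sub>v v) \<bullet>c v) \<ge> 0" using cscalar_prod_self_real[OF v] v by simp
qed auto

lemma fidelity_self: assumes r: "density_op \<rho>" "\<rho> \<in> carrier_mat n n"
  shows "fidelity \<rho> \<rho> = 1"
proof -
  have r1: "nonneg_op \<rho>" and tr: "cmat_trace \<rho> = 1" using r unfolding density_op_def by auto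
  note Sp = op_sqrt_spec[OF r1 r(2)]
  have h: "mat_adjoint \<rho> = \<rho>" using nonneg_opD(1)[OF r1 r(2)] .
  have "op_sqrt (mat_adjoint \<rho> * \<rho>) = \<rho>" unfolding h by (rule op_sqrt_eq[OF r1 r(2) refl])
  thus ?thesis unfolding fidelity_def trace_norm_def Sp(3) using tr by simp
qed

lemma fidelity_nonneg: assumes r1: "nonneg_op \<rho>1" "\<rho>1 \<in> carrier_mat n n" and r2: "nonneg_op \<rho>2" "\<rho>2 \<in> carrier_mat n n"
  shows "fidelity \<rho>1 \<rho>2 \<ge> 0"
proof -
  have Mc: "op_sqrt \<rho>1 * op_sqrt \<rho>2 \<in> carrier_mat n n" using op_sqrt_spec(2)[OF r1] op_sqrt_spec(2)[OF r2] by auto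
  note G = nonneg_op_adjoint_mult[OF Mc]
  show ?thesis unfolding fidelity_def trace_norm_def
    by (rule nonneg_op_trace_nonneg[OF op_sqrt_spec(1,2)[OF G]])
qed

lemma cmat_trace_one_minus_mult: assumes "Q \<in> carrier_mat n n" "A \<in> carrier_mat n n"
  shows "cmat_trace ((1\<^sub>m n - Q) * A) = cmat_trace A - cmat_trace (Q * A)"
proof -
  have "(1\<^sub>m n - Q) * A = 1\<^sub>m n * A - Q * A" by (rule minus_mult_distrib_mat[OF one_carrier_mat assms(1,2)])
  also have "1\<^sub>m n * A = A" using assms(2) by simp
  finally show ?thesis using cmat_trace_minus[of A n "Q * A"] assms by simp
qed

lemma add_one_minus_mat: assumes "Q \<in> carrier_mat n n" shows "Q + (1\<^sub>m n - Q) = (1\<^sub>m n :: complex mat)"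
  by (rule eq_matI, insert assms, auto)

lemma measurement_prob_close: assumes r1: "nonneg_op \<rho>1" "\<rho>1 \<in> carrier_mat n n" "Re (cmat_trace \<rho>1) \<le> 1"
  and F: "1 - (fidelity \<rho>1 \<rho>)\<^sup>2 \<le> e\<^sup>2" and e: "0 \<le> e"
  and r: "density_op \<rho>" "\<rho> \<in> carrier_mat n n"
  and Q: "nonneg_op Q" "Q \<in> carrier_mat n n" "nonneg_op (1\<^sub>m n - Q)"
  shows "Re (cmat_trace (Q * \<rho>)) - e \<le> Re (cmat_trace (Q * \<rho>1))"
proof -
  have r2: "nonneg_op \<rho>" and tr: "cmat_trace \<rho> = 1" using r unfolding density_op_def by auto
  have IQ: "1\<^sub>m n - Q \<in> carrier_mat n n" using Q(2) by (rule minus_carrier_mat)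
  define p where "p = Re (cmat_trace (Q * \<rho>))"
  define q1 where "q1 = Re (cmat_trace (Q * \<rho>1))"
  define q2 where "q2 = Re (cmat_trace ((1\<^sub>m n - Q) * \<rho>1))"
  have p2: "Re (cmat_trace ((1\<^sub>m n - Q) * \<rho>)) = 1 - p" unfolding p_def cmat_trace_one_minus_mult[OF Q(2) r(2)] tr by simp
  have q12: "q1 + q2 = Re (cmat_trace \<rho>1)" unfolding q1_def q2_def cmat_trace_one_minus_mult[OF Q(2) r1(2)] by simp
  have p0: "0 \<le> p" unfolding p_def by (rule cmat_trace_mult_nonneg[OF Q(1,2) r2 r(2)])
  have p1: "0 \<le> 1 - p" unfolding p2[symmetric] by (rule cmat_trace_mult_nonneg[OF Q(3) IQ r2 r(2)])
  have q10: "0 \<le> q1" unfolding q1_def by (rule cmat_trace_mult_nonneg[OF Q(1,2) r1(1,2)])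
  have q20: "0 \<le> q2" unfolding q2_def by (rule cmat_trace_mult_nonneg[OF Q(3) IQ r1(1,2)])
  have "fidelity \<rho>1 \<rho> \<le> sqrt q1 * sqrt p + sqrt q2 * sqrt (1 - p)"
    using fidelity_le_two_outcome_measurement[OF r1(1,2) r2 r(2) Q(1,2) Q(3) IQ add_one_minus_mat[OF Q(2)]]
    unfolding p2 unfolding p_def q1_def q2_def .
  hence Fb: "fidelity \<rho>1 \<rho> \<le> sqrt (q1 * p) + sqrt (q2 * (1 - p))" by (simp add: real_sqrt_mult)
  have F0: "fidelity \<rho>1 \<rho> \<ge> 0" by (rule fidelity_nonneg[OF r1(1,2) r2 r(2)])
  have "p - q1 \<le> e"
    by (rule prob_diff_le_of_fidelity[OF p0 _ q10 q20 _ Fb F0 F e], insert p1 q12 r1(3), auto)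
  thus ?thesis unfolding p_def q1_def by simp
qed

section \<open>Hypothesis testing versus smooth max-relative entropy\<close>

lemma op_le_smult_trace_mult_le:
  assumes Q: "nonneg_op Q" "Q \<in> carrier_mat n n" and A: "A \<in> carrier_mat n n"
    and B: "B \<in> carrier_mat n n" and le: "op_le (complex_of_real \<mu> \<cdot>\<^sub>m A) B"
  shows "\<mu> * Re (cmat_trace (Q * A)) \<le> Re (cmat_trace (Q * B))"
proof -
  have D: "nonneg_op (B - complex_of_real \<mu> \<cdot>\<^sub>m A)" using le unfolding op_le_def by simp
  have Dc: "B - complex_of_real \<mu> \<cdot>\<^sub>m A \<in> carrier_mat n n" using A B by auto
  have "Q * (B - complex_of_real \<mu> \<cdot>\<^sub>m A) = Q * B - complex_of_real \<mu> \<cdot>\<^sub>m (Q * A)"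
    using Q(2) A B by (simp add: mult_minus_distrib_mat[of _ n n] mult_smult_distrib)
  hence "cmat_trace (Q * (B - complex_of_real \<mu> \<cdot>\<^sub>m A))
      = cmat_trace (Q * B) - complex_of_real \<mu> * cmat_trace (Q * A)"
    using Q(2) A B by (simp add: cmat_trace_minus[of _ n] cmat_trace_smult[of _ n])
  with cmat_trace_mult_nonneg[OF Q D Dc] show ?thesis by simp
qed

lemma smooth_max_feasible_le_test:
  assumes \<rho>: "density_op \<rho>" "\<rho> \<in> carrier_mat n n" and \<sigma>: "nonneg_op \<sigma>" "\<sigma> \<in> carrier_mat n n"
    and \<rho>': "\<rho>' \<in> carrier_mat n n" "nonneg_op \<rho>'" "Re (cmat_trace \<rho>') \<le> 1"
      "op_le (complex_of_real \<mu> \<cdot>\<^sub>m \<rho>') \<sigma>" "1 - (fidelity \<rho>' \<rho>)\<^sup>2 \<le> \<epsilon>'\<^sup>2"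
    and Q: "Q \<in> carrier_mat n n" "nonneg_op Q" "op_le Q (1\<^sub>m n)" "\<epsilon> \<le> Re (cmat_trace (Q * \<rho>))"
    and \<epsilon>': "0 \<le> \<epsilon>'" "\<epsilon>' \<le> \<epsilon>"
  shows "\<mu> * (\<epsilon> - \<epsilon>') \<le> Re (cmat_trace (Q * \<sigma>))"
proof (cases "\<mu> \<le> 0")
  case True
  with \<epsilon>' cmat_trace_mult_nonneg[OF Q(2,1) \<sigma>] show ?thesis
    by (meson diff_ge_0_iff_ge mult_nonpos_nonneg order.trans)
next
  case False
  have "nonneg_op (1\<^sub>m n - Q)" using Q(3) unfolding op_le_def by simp
  hence "\<epsilon> - \<epsilon>' \<le> Re (cmat_trace (Q * \<rho>'))"
    using measurement_prob_close[OF \<rho>'(2,1,3,5) \<epsilon>'(1) \<rho> Q(2,1)] Q(4) by linarith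
  hence "\<mu> * (\<epsilon> - \<epsilon>') \<le> \<mu> * Re (cmat_trace (Q * \<rho>'))"
    using False by (intro mult_left_mono) auto
  also have "\<dots> \<le> Re (cmat_trace (Q * \<sigma>))"
    by (rule op_le_smult_trace_mult_le[OF Q(2,1) \<rho>'(1) \<sigma>(2) \<rho>'(4)])
  finally show ?thesis .
qed

lemma max_val_le_hyp_test_val:
  assumes \<rho>: "density_op \<rho>" "\<rho> \<in> carrier_mat n n" and \<sigma>: "nonneg_op \<sigma>" "\<sigma> \<in> carrier_mat n n"
    and \<epsilon>: "\<epsilon> \<le> 1" "\<epsilon>' < \<epsilon>" "0 \<le> \<epsilon>'"
  shows "0 \<le> max_val \<epsilon>' \<rho> \<sigma>"
    and "max_val \<epsilon>' \<rho> \<sigma> \<le> ereal (hyp_test_val \<epsilon> \<rho> \<sigma> * \<epsilon> / (\<epsilon> - \<epsilon>'))"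
proof -
  have dim: "dim_row \<rho> = n" using \<rho>(2) by simp
  have \<rho>_nonneg: "nonneg_op \<rho>" and tr\<rho>: "cmat_trace \<rho> = 1"
    using \<rho>(1) unfolding density_op_def by simp_all
  define Ms where "Ms = {ereal \<mu> | \<mu> \<rho>'. \<rho>' \<in> carrier_mat n n \<and> nonneg_op \<rho>' \<and>
      Re (cmat_trace \<rho>') \<le> 1 \<and> op_le (complex_of_real \<mu> \<cdot>\<^sub>m \<rho>') \<sigma> \<and> 1 - (fidelity \<rho>' \<rho>)\<^sup>2 \<le> \<epsilon>'\<^sup>2}"
  define Hs where "Hs = {Re (cmat_trace (Q * \<sigma>)) / \<epsilon> | Q. Q \<in> carrier_mat n n \<and>
      nonneg_op Q \<and> op_le Q (1\<^sub>m n) \<and> Re (cmat_trace (Q * \<rho>)) \<ge> \<epsilon>}"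
  have max_val: "max_val \<epsilon>' \<rho> \<sigma> = Sup Ms" unfolding max_val_def Ms_def dim ..
  have hyp_test_val: "hyp_test_val \<epsilon> \<rho> \<sigma> = Inf Hs" unfolding hyp_test_val_def Hs_def dim ..
  have "\<sigma> - complex_of_real 0 \<cdot>\<^sub>m \<rho> = \<sigma>" using \<sigma>(2) \<rho>(2) by (intro eq_matI) auto
  hence "op_le (complex_of_real 0 \<cdot>\<^sub>m \<rho>) \<sigma>" unfolding op_le_def using \<sigma> \<rho>(2) by simp
  hence "ereal 0 \<in> Ms" unfolding Ms_def using \<rho>(2) \<rho>_nonneg tr\<rho> fidelity_self[OF \<rho>]
    by (intro CollectI exI[of _ 0] exI[of _ \<rho>]) simp
  thus "0 \<le> max_val \<epsilon>' \<rho> \<sigma>" unfolding max_val by (metis Sup_upper zero_ereal_def)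
  have "1\<^sub>m n - 1\<^sub>m n = (0\<^sub>m n n :: complex mat)" by simp
  hence "op_le (1\<^sub>m n) (1\<^sub>m n)" unfolding op_le_def using nonneg_op_zero[of n] by (simp only:)
  hence "Re (cmat_trace (1\<^sub>m n * \<sigma>)) / \<epsilon> \<in> Hs" unfolding Hs_def
    using nonneg_op_one \<rho>(2) tr\<rho> \<epsilon>(1) by (intro CollectI exI[of _ "1\<^sub>m n"]) simp
  hence "Hs \<noteq> {}" by blast
  have "y \<le> ereal (Inf Hs * \<epsilon> / (\<epsilon> - \<epsilon>'))" if "y \<in> Ms" for y
  proof -
    obtain \<mu> \<rho>' where y: "y = ereal \<mu>" and \<rho>': "\<rho>' \<in> carrier_mat n n" "nonneg_op \<rho>'"
      "Re (cmat_trace \<rho>') \<le> 1" "op_le (complex_of_real \<mu> \<cdot>\<^sub>m \<rho>') \<sigma>" "1 - (fidelity \<rho>' \<rho>)\<^sup>2 \<le> \<epsilon>'\<^sup>2"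
      using \<open>y \<in> Ms\<close> unfolding Ms_def by blast
    have "\<mu> * (\<epsilon> - \<epsilon>') / \<epsilon> \<le> Inf Hs"
    proof (rule cInf_greatest[OF \<open>Hs \<noteq> {}\<close>])
      fix x assume "x \<in> Hs"
      then obtain Q where x: "x = Re (cmat_trace (Q * \<sigma>)) / \<epsilon>" and Q: "Q \<in> carrier_mat n n"
        "nonneg_op Q" "op_le Q (1\<^sub>m n)" "Re (cmat_trace (Q * \<rho>)) \<ge> \<epsilon>" unfolding Hs_def by blast
      have "\<mu> * (\<epsilon> - \<epsilon>') \<le> Re (cmat_trace (Q * \<sigma>))"
        using smooth_max_feasible_le_test[OF \<rho> \<sigma> \<rho>' Q] \<epsilon> by simp
      thus "\<mu> * (\<epsilon> - \<epsilon>') / \<epsilon> \<le> x" unfolding x using \<epsilon> by (simp add: divide_right_mono)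
    qed
    hence "\<mu> \<le> Inf Hs * \<epsilon> / (\<epsilon> - \<epsilon>')" using \<epsilon> by (simp add: field_simps)
    thus ?thesis unfolding y by simp
  qed
  thus "max_val \<epsilon>' \<rho> \<sigma> \<le> ereal (hyp_test_val \<epsilon> \<rho> \<sigma> * \<epsilon> / (\<epsilon> - \<epsilon>'))"
    unfolding max_val hyp_test_val by (rule Sup_least)
qed

theorem lemmaA6:
  fixes n :: nat and \<rho> \<sigma> :: "complex mat" and \<epsilon> \<epsilon>' :: real
  assumes "\<rho> \<in> carrier_mat n n" and "\<sigma> \<in> carrier_mat n n"
    and "density_op \<rho>" and "nonneg_op \<sigma>"
    and "\<epsilon> \<le> 1" and "\<epsilon>' < \<epsilon>" and "0 \<le> \<epsilon>'"
  shows "D_H \<epsilon> \<rho> \<sigma> \<le> D_max \<epsilon>' \<rho> \<sigma> + ereal (log 2 (\<epsilon> / (\<epsilon> - \<epsilon>')))"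
proof (cases "max_val \<epsilon>' \<rho> \<sigma> = 0")
  case True
  thus ?thesis unfolding D_max_def by simp
next
  case False
  note bounds = max_val_le_hyp_test_val[OF assms(3,1,4,2,5-7)]
  define h where "h = hyp_test_val \<epsilon> \<rho> \<sigma>"
  obtain m where m: "max_val \<epsilon>' \<rho> \<sigma> = ereal m" and "0 < m"
    using bounds False by (cases "max_val \<epsilon>' \<rho> \<sigma>") auto
  have "m * (\<epsilon> - \<epsilon>') / \<epsilon> \<le> h" and "0 < m * (\<epsilon> - \<epsilon>') / \<epsilon>"
    using bounds(2) \<open>0 < m\<close> assms(6,7) unfolding m h_def by (auto simp: field_simps)
  hence "log 2 (m * (\<epsilon> - \<epsilon>') / \<epsilon>) \<le> log 2 h" and "0 < h" by auto
  moreover have "log 2 (m * (\<epsilon> - \<epsilon>') / \<epsilon>) = log 2 m - log 2 (\<epsilon> / (\<epsilon> - \<epsilon>'))"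
    using \<open>0 < m\<close> assms(6,7) by (simp add: log_mult log_divide)
  ultimately show ?thesis
    unfolding D_H_def D_max_def m h_def[symmetric] using \<open>0 < m\<close> by simp
qed

end
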